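(* Let $A$ be a left counital bialgebra and let $\mu_T:\mathbf{k}\to Ш(A)$, $c\mapsto c1_A$. Then $(Ш(A),\diamond,\mu_T,\Delta_T,\varepsilon_T,P_r)$ is a left counital cocycle bialgebra; that is: $(Ш(A),\diamond,\mu_T)$ is a commutative unital algebra on which $P_r$ is a Nijenhuis operator; $\Delta_T$ and $\varepsilon_T$ are algebra homomorphisms; $\Delta_T$ is coassociative; $(\varepsilon_T\otimes\mathrm{id})\Delta_T=\beta_\ell$ (where $\beta_\ell(\mathfrak a)=1\otimes\mathfrak a$); and the one-cocycle property $\Delta_TP_r=(\mathrm{id}\otimes P_r)\Delta_T$ holds.
   Context: Throughout, $\mathbf{k}$ is a commutative unital ring, all algebras are unital commutative $\mathbf{k}$-algebras, tensor products are over $\mathbf{k}$. A left counital bialgebra $(H,m,\mu,\Delta,\varepsilon)$ is an algebra $H$ with algebra homomorphisms $\Delta:H\to H\otimes H$ (coassociative) and $\varepsilon:H\to\mathbf{k}$ satisfying left counicity $(\varepsilon\otimes\mathrm{id})\Delta=\beta_\ell$, where $\beta_\ell(u)=1\otimes u$; right counicity is not required. A Nijenhuis operator on an algebra $R$ is a linear $P:R\to R$ with $P(x)P(y)=P(P(x)y)+P(xP(y))-P^2(xy)$. For an algebra $A$ with unit $1_A$, $Ш(A)=\bigoplus_{n\ge1}A^{\otimes n}$, $P_r(\mathfrak a)=1_A\otimes\mathfrak a$, and the product $\diamond$ is defined bilinearly on pure tensors $\mathfrak a=a_1\otimes\mathfrak a'\in A^{\otimes m}$, $\mathfrak b=b_1\otimes\mathfrak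 b'\in A^{\otimes n}$ by: $a_1b_1$ if $m=n=1$; $a_1b_1\otimes\mathfrak b'$ if $m=1,n\ge2$; $a_1b_1\otimes\mathfrak a'$ if $m\ge2,n=1$; $a_1b_1\otimes\big(\mathfrak a'\diamond(1_A\otimes\mathfrak b')+(1_A\otimes\mathfrak a')\diamond\mathfrak b'-1_A\otimes(\mathfrak a'\diamond\mathfrak b')\big)$ if $m,n\ge2$. $Ш(A)\otimes Ш(A)$ has the product $\bullet$, $(x\otimes y)\bullet(x'\otimes y')=(x\diamond x')\otimes(y\diamond y')$, and $A\otimes A\subseteq Ш(A)\otimes Ш(A)$ via $A=A^{\otimes1}$. When $A$ is a left counital bialgebra with coproduct $\Delta_A$ and counit $\varepsilon_A$: the linear map $\Delta_T:Ш(A)\to Ш(A)\otimes Ш(A)$ is defined on pure tensors by induction on tensor length: $\Delta_T(a)=\Delta_A(a)$ for $a\in A$, and for $\mathfrak a'\in A^{\otimes n}$, $\Delta_T(1_A\otimes\mathfrak a')=(\mathrm{id}\otimes P_r)\Delta_T(\mathfrak a')$ and $\Delta_T(a_1\otimes\mathfrak a')=\Delta_A(a_1)\bullet(\mathrm{id}\otimes P_r)\Delta_T(\mathfrak a')$; and $\varepsilon_T:Ш(A)\to\mathbf{k}$ is the linear map $\varepsilon_T(a_1\otimes\cdots\otimes a_n)=\varepsilon_A(a_1)\cdots\varepsilon_A(a_n)$. *)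

theory Defs
  imports Main "HOL-Library.Poly_Mapping"
begin

text \<open>
Tensor products: every module occurring (Sha(A), Sha(A) (x) Sha(A), Sha(A)^(x)3, A (x) A, ...)
is a direct sum of tensor products of tensor powers of A, hence a quotient of the free
k-module on "block tuples" of elements of A (type 'a list list: a list of blocks, each
block a word a_1 (x) ... (x) a_n).
The quotient is by the submodule nullT sc generated by multilinearity relations in every
slot of every block.
An element of Sha(A) is represented by a combination of one-block tuples [w], w nonempty;
Sha(A) (x) Sha(A) by two-block tuples [u,v]; A (x) A by [[x],[y]]; and so on.
\<close>

definition smul :: "'k::comm_ring_1 \<Rightarrow> ('i \<Rightarrow>\<^sub>0 'k) \<Rightarrow> ('i \<Rightarrow>\<^sub>0 'k)" where
  "smul c p = Poly_Mapping.map (\<lambda>x. c * x) p"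

definition pt :: "'a list list \<Rightarrow> ('a list list \<Rightarrow>\<^sub>0 'k::comm_ring_1)" where
  "pt I = Poly_Mapping.single I 1"

definition lin_ext :: "('i \<Rightarrow> ('j \<Rightarrow>\<^sub>0 'k::comm_ring_1)) \<Rightarrow> ('i \<Rightarrow>\<^sub>0 'k) \<Rightarrow> ('j \<Rightarrow>\<^sub>0 'k)" where
  "lin_ext f p = (\<Sum>i\<in>Poly_Mapping.keys p. smul (Poly_Mapping.lookup p i) (f i))"

definition bilin_ext :: "('i \<Rightarrow> 'j \<Rightarrow> ('l \<Rightarrow>\<^sub>0 'k::comm_ring_1)) \<Rightarrow> ('i \<Rightarrow>\<^sub>0 'k) \<Rightarrow> ('j \<Rightarrow>\<^sub>0 'k) \<Rightarrow> ('l \<Rightarrow>\<^sub>0 'k)" where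
  "bilin_ext g p q = (\<Sum>i\<in>Poly_Mapping.keys p. \<Sum>j\<in>Poly_Mapping.keys q. smul (Poly_Mapping.lookup p i * Poly_Mapping.lookup q j) (g i j))"

inductive nullT :: "('k::comm_ring_1 \<Rightarrow> 'a::comm_ring_1 \<Rightarrow> 'a) \<Rightarrow> ('a list list \<Rightarrow>\<^sub>0 'k) \<Rightarrow> bool"
  for sc where
  null_zero: "nullT sc 0"
| null_add_rel: "nullT sc (pt (Bs @ [u @ [a + b] @ v] @ Cs) - pt (Bs @ [u @ [a] @ v] @ Cs)
                           - pt (Bs @ [u @ [b] @ v] @ Cs))"
| null_smul_rel: "nullT sc (pt (Bs @ [u @ [sc c a] @ v] @ Cs) - smul c (pt (Bs @ [u @ [a] @ v] @ Cs)))"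
| null_add: "nullT sc p \<Longrightarrow> nullT sc q \<Longrightarrow> nullT sc (p + q)"
| null_smul: "nullT sc p \<Longrightarrow> nullT sc (smul c p)"

definition teq :: "('k::comm_ring_1 \<Rightarrow> 'a::comm_ring_1 \<Rightarrow> 'a) \<Rightarrow> ('a list list \<Rightarrow>\<^sub>0 'k) \<Rightarrow> ('a list list \<Rightarrow>\<^sub>0 'k) \<Rightarrow> bool" where
  "teq sc p q \<longleftrightarrow> nullT sc (p - q)"

definition k_algebra :: "('k::comm_ring_1 \<Rightarrow> 'a::comm_ring_1 \<Rightarrow> 'a) \<Rightarrow> bool" where
  "k_algebra sc \<longleftrightarrow>
     (\<forall>c a b. sc c (a + b) = sc c a + sc c b) \<and>
     (\<forall>c d a. sc (c + d) a = sc c a + sc d a) \<and>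
     (\<forall>c d a. sc (c * d) a = sc c (sc d a)) \<and>
     (\<forall>a. sc 1 a = a) \<and>
     (\<forall>c a b. sc c (a * b) = sc c a * b)"

definition tens :: "('a list list \<Rightarrow>\<^sub>0 'k::comm_ring_1) \<Rightarrow> ('a list list \<Rightarrow>\<^sub>0 'k) \<Rightarrow> ('a list list \<Rightarrow>\<^sub>0 'k)" where
  "tens p q = bilin_ext (\<lambda>I J. pt (I @ J)) p q"

definition prepend :: "'a \<Rightarrow> ('a list list \<Rightarrow>\<^sub>0 'k::comm_ring_1) \<Rightarrow> ('a list list \<Rightarrow>\<^sub>0 'k)" where
  "prepend c = lin_ext (\<lambda>I. case I of [w] \<Rightarrow> pt [c # w] | _ \<Rightarrow> 0)"

definition Pr :: "('a::one list list \<Rightarrow>\<^sub>0 'k::comm_ring_1) \<Rightarrow> ('a list list \<Rightarrow>\<^sub>0 'k)" where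
  "Pr = prepend 1"

text \<open>the product diamond on pure tensors (words); junk value 0 on empty words\<close>
function dw :: "'a::comm_ring_1 list \<Rightarrow> 'a list \<Rightarrow> ('a list list \<Rightarrow>\<^sub>0 'k::comm_ring_1)" where
  "dw [a] [b] = pt [[a * b]]"
| "dw [a] (b # d # v) = pt [(a * b) # d # v]"
| "dw (a # c # u) [b] = pt [(a * b) # c # u]"
| "dw (a # c # u) (b # d # v) =
     prepend (a * b) (dw (c # u) (1 # d # v) + dw (1 # c # u) (d # v) - prepend 1 (dw (c # u) (d # v)))"
| "dw [] v = 0"
| "dw (a # u) [] = 0"
  by pat_completeness auto
termination by (relation "measure (\<lambda>(x, y). length x + length y)") auto

definition diamond :: "('a::comm_ring_1 list list \<Rightarrow>\<^sub>0 'k::comm_ring_1) \<Rightarrow> ('a list list \<Rightarrow>\<^sub>0 'k) \<Rightarrow> ('a list list \<Rightarrow>\<^sub>0 'k)" where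
  "diamond p q = bilin_ext (\<lambda>I J. case (I, J) of ([u], [v]) \<Rightarrow> dw u v | _ \<Rightarrow> 0) p q"

definition muT :: "'k::comm_ring_1 \<Rightarrow> ('a::one list list \<Rightarrow>\<^sub>0 'k)" where
  "muT c = smul c (pt [[1]])"

definition is_sh :: "('a list list \<Rightarrow>\<^sub>0 'k::zero) \<Rightarrow> bool" where
  "is_sh p \<longleftrightarrow> (\<forall>I\<in>Poly_Mapping.keys p. \<exists>w. w \<noteq> [] \<and> I = [w])"

definition is_sh2 :: "('a list list \<Rightarrow>\<^sub>0 'k::zero) \<Rightarrow> bool" where
  "is_sh2 p \<longleftrightarrow> (\<forall>I\<in>Poly_Mapping.keys p. \<exists>u v. u \<noteq> [] \<and> v \<noteq> [] \<and> I = [u, v])"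

text \<open>the product bullet on Sha(A)(x)Sha(A) (restricting to the product of A(x)A)\<close>
definition bullet :: "('a::comm_ring_1 list list \<Rightarrow>\<^sub>0 'k::comm_ring_1) \<Rightarrow> ('a list list \<Rightarrow>\<^sub>0 'k) \<Rightarrow> ('a list list \<Rightarrow>\<^sub>0 'k)" where
  "bullet p q = bilin_ext (\<lambda>I J. case (I, J) of ([u, v], [u', v']) \<Rightarrow> tens (dw u u') (dw v v') | _ \<Rightarrow> 0) p q"

definition id_Pr :: "('a::one list list \<Rightarrow>\<^sub>0 'k::comm_ring_1) \<Rightarrow> ('a list list \<Rightarrow>\<^sub>0 'k)" where
  "id_Pr = lin_ext (\<lambda>I. case I of [u, v] \<Rightarrow> pt [u, 1 # v] | _ \<Rightarrow> 0)"

text \<open>Delta_T on pure tensors (the clause for 1_A (x) a' is the instance a_1 = 1_A of the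
  general clause, since Delta_A(1_A) = 1 (x) 1 is the unit for bullet)\<close>
fun DTw :: "('a::comm_ring_1 \<Rightarrow> ('a list list \<Rightarrow>\<^sub>0 'k::comm_ring_1)) \<Rightarrow> 'a list \<Rightarrow> ('a list list \<Rightarrow>\<^sub>0 'k)" where
  "DTw Delta [] = 0"
| "DTw Delta [a] = Delta a"
| "DTw Delta (a # b # w) = bullet (Delta a) (id_Pr (DTw Delta (b # w)))"

definition DeltaT :: "('a::comm_ring_1 \<Rightarrow> ('a list list \<Rightarrow>\<^sub>0 'k::comm_ring_1)) \<Rightarrow> ('a list list \<Rightarrow>\<^sub>0 'k) \<Rightarrow> ('a list list \<Rightarrow>\<^sub>0 'k)" where
  "DeltaT Delta = lin_ext (\<lambda>I. case I of [w] \<Rightarrow> DTw Delta w | _ \<Rightarrow> 0)"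

definition epsw :: "('a \<Rightarrow> 'k::comm_ring_1) \<Rightarrow> 'a list \<Rightarrow> 'k" where
  "epsw eps w = prod_list (map eps w)"

definition epsT :: "('a \<Rightarrow> 'k::comm_ring_1) \<Rightarrow> ('a list list \<Rightarrow>\<^sub>0 'k) \<Rightarrow> 'k" where
  "epsT eps p = (\<Sum>I\<in>Poly_Mapping.keys p. Poly_Mapping.lookup p I * (case I of [w] \<Rightarrow> epsw eps w | _ \<Rightarrow> 0))"

definition tmap_left :: "('a list \<Rightarrow> ('a list list \<Rightarrow>\<^sub>0 'k::comm_ring_1)) \<Rightarrow> ('a list list \<Rightarrow>\<^sub>0 'k) \<Rightarrow> ('a list list \<Rightarrow>\<^sub>0 'k)" where
  "tmap_left f = lin_ext (\<lambda>I. case I of [u, v] \<Rightarrow> tens (f u) (pt [v]) | _ \<Rightarrow> 0)"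

definition tmap_right :: "('a list \<Rightarrow> ('a list list \<Rightarrow>\<^sub>0 'k::comm_ring_1)) \<Rightarrow> ('a list list \<Rightarrow>\<^sub>0 'k) \<Rightarrow> ('a list list \<Rightarrow>\<^sub>0 'k)" where
  "tmap_right f = lin_ext (\<lambda>I. case I of [u, v] \<Rightarrow> tens (pt [u]) (f v) | _ \<Rightarrow> 0)"

definition counit_left :: "('a list \<Rightarrow> 'k::comm_ring_1) \<Rightarrow> ('a list list \<Rightarrow>\<^sub>0 'k) \<Rightarrow> ('a list list \<Rightarrow>\<^sub>0 'k)" where
  "counit_left e = lin_ext (\<lambda>I. case I of [u, v] \<Rightarrow> smul (e u) (pt [v]) | _ \<Rightarrow> 0)"

definition lift1 :: "('a \<Rightarrow> ('a list list \<Rightarrow>\<^sub>0 'k::zero)) \<Rightarrow> 'a list \<Rightarrow> ('a list list \<Rightarrow>\<^sub>0 'k)" where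
  "lift1 Delta u = (case u of [x] \<Rightarrow> Delta x | _ \<Rightarrow> 0)"

definition lc_bialgebra :: "('k::comm_ring_1 \<Rightarrow> 'a::comm_ring_1 \<Rightarrow> 'a) \<Rightarrow> ('a \<Rightarrow> ('a list list \<Rightarrow>\<^sub>0 'k)) \<Rightarrow> ('a \<Rightarrow> 'k) \<Rightarrow> bool" where
  "lc_bialgebra sc Delta eps \<longleftrightarrow>
     k_algebra sc \<and>
     (\<forall>a. Poly_Mapping.keys (Delta a) \<subseteq> {[[x], [y]] | x y. True}) \<and>
     \<comment> \<open>Delta is a k-algebra homomorphism A -> A (x) A\<close>
     (\<forall>a b. teq sc (Delta (a + b)) (Delta a + Delta b)) \<and>
     (\<forall>c a. teq sc (Delta (sc c a)) (smul c (Delta a))) \<and>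
     (\<forall>a b. teq sc (Delta (a * b)) (bullet (Delta a) (Delta b))) \<and>
     teq sc (Delta 1) (pt [[1], [1]]) \<and>
     \<comment> \<open>coassociativity\<close>
     (\<forall>a. teq sc (tmap_left (lift1 Delta) (Delta a)) (tmap_right (lift1 Delta) (Delta a))) \<and>
     \<comment> \<open>eps is a k-algebra homomorphism A -> k\<close>
     (\<forall>a b. eps (a + b) = eps a + eps b) \<and>
     (\<forall>c a. eps (sc c a) = c * eps a) \<and>
     (\<forall>a b. eps (a * b) = eps a * eps b) \<and>
     eps 1 = 1 \<and>
     \<comment> \<open>left counicity (eps (x) id) Delta = beta_l, with k (x) A = A\<close>
     (\<forall>a. teq sc (counit_left (epsw eps) (Delta a)) (pt [[a]]))"

end

theory Submission
  imports Defs
begin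

text \<open>
  All operations are given on words and extended (bi)linearly to the free module on block tuples;
  they are well defined on tensors because their values on words are linear in every letter.
  The algebra laws of the product are proved on words: commutativity from the symmetric
  recursion, the Nijenhuis identity because it is the recursion itself, and associativity by
  induction on the total length, splitting off first letters and expanding three words that start
  with \<open>1\<^sub>A\<close> by the Nijenhuis identity.  \<open>Delta_T\<close> is multiplicative on words by induction on
  length, as its recursion \<open>Delta_T(a w) = Delta_A(a) \<bullet> (id \<otimes> P_r) Delta_T(w)\<close> is compatible with
  the recursion of the product through the cocycle property and the Nijenhuis identity for
  \<open>id \<otimes> P_r\<close>.  Counicity and coassociativity follow from those of \<open>Delta_A\<close> by induction on
  the word, since both sides turn that recursion into a product.
\<close>

section \<open>Linear algebra of finitely supported functions\<close>

type_synonym ('a, 'k) tensor = "'a list list \<Rightarrow>\<^sub>0 'k"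

lemma lookup_smul [simp]: "Poly_Mapping.lookup (smul c p) i = c * Poly_Mapping.lookup p i"
  unfolding smul_def by transfer (auto simp: when_def)

lemma smul_0_right [simp]: "smul c 0 = 0"
  and smul_0_left [simp]: "smul 0 p = 0"
  and smul_1 [simp]: "smul 1 p = p"
  and smul_smul [simp]: "smul c (smul d p) = smul (c * d) p"
  and smul_add_right: "smul c (p + q) = smul c p + smul c q"
  and smul_add_left: "smul (c + d) p = smul c p + smul d p"
  and smul_diff_right: "smul c (p - q) = smul c p - smul c q"
  and smul_minus_1: "smul (-1) p = - p"
  by (rule poly_mapping_eqI; simp add: lookup_add lookup_minus algebra_simps)+

lemma smul_sum: "smul c (sum f A) = (\<Sum>i\<in>A. smul c (f i))"
  by (induction A rule: infinite_finite_induct) (auto simp: smul_add_right)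

lemma keys_smul_subset: "Poly_Mapping.keys (smul c p) \<subseteq> Poly_Mapping.keys p"
  by (auto simp: in_keys_iff)

lemma keys_pt [simp]: "Poly_Mapping.keys (pt I :: _ \<Rightarrow>\<^sub>0 'k::comm_ring_1) = {I}"
  by (simp add: pt_def)

lemma lin_ext_pt [simp]: "lin_ext f (pt I) = f I"
  by (simp add: lin_ext_def pt_def)

lemma lin_ext_smul: "lin_ext f (smul c p) = smul c (lin_ext f p)"
proof -
  have "lin_ext f (smul c p) = (\<Sum>i\<in>Poly_Mapping.keys p. smul (c * Poly_Mapping.lookup p i) (f i))"
    unfolding lin_ext_def by (rule sum.mono_neutral_cong_left) (auto simp: in_keys_iff)
  then show ?thesis by (simp add: lin_ext_def smul_sum)
qed

lemma lin_ext_add: "lin_ext f (p + q) = lin_ext f p + lin_ext f q"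
proof -
  let ?K = "Poly_Mapping.keys p \<union> Poly_Mapping.keys q"
  have extend: "lin_ext f r = (\<Sum>i\<in>?K. smul (Poly_Mapping.lookup r i) (f i))"
    if "Poly_Mapping.keys r \<subseteq> ?K" for r
    unfolding lin_ext_def using that by (intro sum.mono_neutral_cong_left) (auto simp: in_keys_iff)
  show ?thesis
    using keys_add[of p q]
    by (simp add: extend lookup_add smul_add_left sum.distrib)
qed

lemma lin_ext_0 [simp]: "lin_ext f 0 = 0"
  and lin_ext_diff: "lin_ext f (p - q) = lin_ext f p - lin_ext f q"
  and lin_ext_uminus: "lin_ext f (- p) = - lin_ext f p"
    apply (simp add: lin_ext_def)
   apply (metis add_uminus_conv_diff lin_ext_add lin_ext_smul smul_minus_1)
  by (metis lin_ext_smul smul_minus_1)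

lemmas lin_ext_linear = lin_ext_add lin_ext_diff lin_ext_smul lin_ext_uminus lin_ext_0

lemma lin_ext_cong: "(\<And>i. i \<in> Poly_Mapping.keys p \<Longrightarrow> f i = g i) \<Longrightarrow> lin_ext f p = lin_ext g p"
  by (simp add: lin_ext_def)

lemma keys_lin_ext_subset:
  "Poly_Mapping.keys (lin_ext f p) \<subseteq> (\<Union>i\<in>Poly_Mapping.keys p. Poly_Mapping.keys (f i))"
proof -
  have "Poly_Mapping.keys (lin_ext f p)
      \<subseteq> (\<Union>i\<in>Poly_Mapping.keys p. Poly_Mapping.keys (smul (Poly_Mapping.lookup p i) (f i)))"
    unfolding lin_ext_def by (rule keys_sum)
  then show ?thesis using keys_smul_subset by fastforce
qed

lemma lin_ext_pt_self: "lin_ext pt p = p"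
proof -
  have *: "finite I \<Longrightarrow> Poly_Mapping.lookup (\<Sum>i\<in>I. smul (Poly_Mapping.lookup p i) (pt i)) j =
            (if j \<in> I then Poly_Mapping.lookup p j else 0)" for I j
    by (induction I rule: finite_induct) (auto simp: lookup_add pt_def lookup_single when_def)
  show ?thesis
    unfolding lin_ext_def by (rule poly_mapping_eqI) (fastforce simp add: in_keys_iff *)
qed

lemma lin_induct [consumes 1, case_names zero sing add]:
  assumes "Poly_Mapping.keys p \<subseteq> S"
    and "P 0"
    and "\<And>x c. x \<in> S \<Longrightarrow> P (smul c (pt x))"
    and "\<And>a b. P a \<Longrightarrow> P b \<Longrightarrow> P (a + b)"
  shows "P p"
proof -
  have "P (\<Sum>i\<in>I. smul (Poly_Mapping.lookup p i) (pt i))" if "I \<subseteq> Poly_Mapping.keys p" for I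
    using finite_subset [OF that finite_keys] that
  proof (induction I rule: finite_induct)
    case (insert i I)
    then show ?case using assms(1) by (auto intro!: assms(4) assms(3))
  qed (simp add: assms(2))
  then show ?thesis
    using lin_ext_pt_self[of p] unfolding lin_ext_def by (metis subset_refl)
qed

lemma lin_ext_fun_add: "lin_ext (\<lambda>i. f i + g i) p = lin_ext f p + lin_ext g p"
  by (simp add: lin_ext_def smul_add_right sum.distrib)

lemma lin_ext_fun_diff: "lin_ext (\<lambda>i. f i - g i) p = lin_ext f p - lin_ext g p"
  by (simp add: lin_ext_def smul_diff_right sum_subtractf)

lemma lin_ext_fun_smul: "lin_ext (\<lambda>i. smul c (f i)) p = smul c (lin_ext f p)"
  by (simp add: lin_ext_def smul_sum mult.commute)

lemma lin_ext_fun_zero: "lin_ext (\<lambda>i. 0) p = 0"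
  by (simp add: lin_ext_def)

lemma lin_ext_fun_uminus: "lin_ext (\<lambda>i. - f i) p = - lin_ext f p"
  using lin_ext_fun_diff[of "\<lambda>i. 0" f p] by (simp add: lin_ext_def)

lemma bilin_ext_lin_ext: "bilin_ext g p q = lin_ext (\<lambda>i. lin_ext (g i) q) p"
  unfolding bilin_ext_def lin_ext_def by (simp add: smul_sum)

lemma bilin_ext_pt [simp]: "bilin_ext g (pt I) (pt J) = g I J"
  by (simp add: bilin_ext_lin_ext)

lemma bilin_ext_add1: "bilin_ext g (p + p') q = bilin_ext g p q + bilin_ext g p' q"
  and bilin_ext_add2: "bilin_ext g p (q + q') = bilin_ext g p q + bilin_ext g p q'"
  and bilin_ext_diff1: "bilin_ext g (p - p') q = bilin_ext g p q - bilin_ext g p' q"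
  and bilin_ext_diff2: "bilin_ext g p (q - q') = bilin_ext g p q - bilin_ext g p q'"
  and bilin_ext_smul1: "bilin_ext g (smul c p) q = smul c (bilin_ext g p q)"
  and bilin_ext_smul2: "bilin_ext g p (smul c q) = smul c (bilin_ext g p q)"
  and bilin_ext_zero1: "bilin_ext g 0 q = 0"
  and bilin_ext_zero2: "bilin_ext g p 0 = 0"
  and bilin_ext_uminus1: "bilin_ext g (- p) q = - bilin_ext g p q"
  and bilin_ext_uminus2: "bilin_ext g p (- q) = - bilin_ext g p q"
  unfolding bilin_ext_lin_ext
  by (simp_all only: lin_ext_linear lin_ext_fun_add lin_ext_fun_diff lin_ext_fun_smul
      lin_ext_fun_uminus lin_ext_0 lin_ext_fun_zero)

lemmas bilin_ext_linear = bilin_ext_add1 bilin_ext_add2 bilin_ext_diff1 bilin_ext_diff2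
  bilin_ext_smul1 bilin_ext_smul2 bilin_ext_zero1 bilin_ext_zero2 bilin_ext_uminus1 bilin_ext_uminus2

lemma bilin_ext_cong:
  "(\<And>i j. i \<in> Poly_Mapping.keys p \<Longrightarrow> j \<in> Poly_Mapping.keys q \<Longrightarrow> g i j = g' i j)
   \<Longrightarrow> bilin_ext g p q = bilin_ext g' p q"
  unfolding bilin_ext_def by (intro sum.cong refl) auto

lemma keys_bilin_ext_subset:
  "Poly_Mapping.keys (bilin_ext g p q)
   \<subseteq> (\<Union>i\<in>Poly_Mapping.keys p. \<Union>j\<in>Poly_Mapping.keys q. Poly_Mapping.keys (g i j))"
proof -
  have "Poly_Mapping.keys (lin_ext (\<lambda>i. lin_ext (g i) q) p)
      \<subseteq> (\<Union>i\<in>Poly_Mapping.keys p. Poly_Mapping.keys (lin_ext (g i) q))"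
    by (rule keys_lin_ext_subset)
  also have "\<dots> \<subseteq> (\<Union>i\<in>Poly_Mapping.keys p. \<Union>j\<in>Poly_Mapping.keys q. Poly_Mapping.keys (g i j))"
    using keys_lin_ext_subset[of "g _" q] by (intro UN_mono) auto
  finally show ?thesis by (simp add: bilin_ext_lin_ext)
qed

lemma bilin_induct [consumes 2, case_names zero1 zero2 sing add1 add2]:
  assumes "Poly_Mapping.keys p \<subseteq> S" "Poly_Mapping.keys q \<subseteq> T"
    and "\<And>q. P 0 q" and "\<And>p. P p 0"
    and sing: "\<And>x y c d. x \<in> S \<Longrightarrow> y \<in> T \<Longrightarrow> P (smul c (pt x)) (smul d (pt y))"
    and "\<And>a b q. P a q \<Longrightarrow> P b q \<Longrightarrow> P (a + b) q"
    and "\<And>a b p. P p a \<Longrightarrow> P p b \<Longrightarrow> P p (a + b)"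
  shows "P p q"
  using assms(1)
proof (induction p rule: lin_induct)
  case (sing x c)
  from assms(2) show ?case
  proof (induction q rule: lin_induct)
    case (sing y d)
    with \<open>x \<in> S\<close> show ?case by (rule assms(5))
  qed (simp_all add: assms(4,7))
qed (simp_all add: assms(3,6))

section \<open>The tensor relations\<close>

lemma nullT_uminus: "nullT sc p \<Longrightarrow> nullT sc (- p)"
  by (metis null_smul smul_minus_1)

lemma nullT_diff: "nullT sc p \<Longrightarrow> nullT sc q \<Longrightarrow> nullT sc (p - q)"
  by (metis add_uminus_conv_diff null_add nullT_uminus)

lemma nullT_sum: "(\<And>i. i \<in> A \<Longrightarrow> nullT sc (f i)) \<Longrightarrow> nullT sc (sum f A)"
  by (induction A rule: infinite_finite_induct) (auto intro: null_zero null_add)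

lemma nullT_lin_ext_fun:
  "(\<And>i. i \<in> Poly_Mapping.keys p \<Longrightarrow> nullT sc (f i)) \<Longrightarrow> nullT sc (lin_ext f p)"
  unfolding lin_ext_def by (auto intro!: nullT_sum null_smul)

lemma nullT_iff_teq_0: "nullT sc p \<longleftrightarrow> teq sc p 0"
  by (simp add: teq_def)

lemma teq_refl [simp, intro]: "teq sc p p"
  by (simp add: teq_def null_zero)

lemma teq_trans [trans]: "teq sc p q \<Longrightarrow> teq sc q r \<Longrightarrow> teq sc p r"
  unfolding teq_def using null_add[of sc "p - q" "q - r"] by simp

lemma teq_add: "teq sc p p' \<Longrightarrow> teq sc q q' \<Longrightarrow> teq sc (p + q) (p' + q')"
  unfolding teq_def using null_add[of sc "p - p'" "q - q'"] by (simp add: algebra_simps)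

lemma teq_diff: "teq sc p p' \<Longrightarrow> teq sc q q' \<Longrightarrow> teq sc (p - q) (p' - q')"
  unfolding teq_def using nullT_diff[of sc "p - p'" "q - q'"] by (simp add: algebra_simps)

lemma teq_smul: "teq sc p p' \<Longrightarrow> teq sc (smul c p) (smul c p')"
  unfolding teq_def by (metis smul_diff_right null_smul)

lemma teq_rel_add: "teq sc (pt (Bs @ [u @ [a + b] @ v] @ Cs))
   (pt (Bs @ [u @ [a] @ v] @ Cs) + pt (Bs @ [u @ [b] @ v] @ Cs))"
  unfolding teq_def using null_add_rel[of sc Bs u a b v Cs] by (simp add: diff_diff_eq)

lemma teq_rel_smul:
  "teq sc (pt (Bs @ [u @ [sc c a] @ v] @ Cs)) (smul c (pt (Bs @ [u @ [a] @ v] @ Cs)))"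
  unfolding teq_def using null_smul_rel .

lemma teq_lin_ext_fun:
  "(\<And>i. i \<in> Poly_Mapping.keys p \<Longrightarrow> teq sc (f i) (g i)) \<Longrightarrow> teq sc (lin_ext f p) (lin_ext g p)"
  unfolding teq_def lin_ext_fun_diff[symmetric] by (rule nullT_lin_ext_fun)

text \<open>
  A map on block tuples is \<open>multilinear\<close> if it sends every generating relation of \<open>nullT\<close> to a
  relation, so that its linear extension is well defined on tensors.
\<close>

definition multilinear ::
    "('k::comm_ring_1 \<Rightarrow> 'a::comm_ring_1 \<Rightarrow> 'a) \<Rightarrow> ('a list list \<Rightarrow> ('a, 'k) tensor) \<Rightarrow> bool" where
  "multilinear sc f \<longleftrightarrow>
    (\<forall>Bs u a b v Cs. teq sc (f (Bs @ [u @ [a + b] @ v] @ Cs))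
       (f (Bs @ [u @ [a] @ v] @ Cs) + f (Bs @ [u @ [b] @ v] @ Cs))) \<and>
    (\<forall>Bs u c a v Cs. teq sc (f (Bs @ [u @ [sc c a] @ v] @ Cs)) (smul c (f (Bs @ [u @ [a] @ v] @ Cs))))"

definition multilinear_word ::
    "('k::comm_ring_1 \<Rightarrow> 'a::comm_ring_1 \<Rightarrow> 'a) \<Rightarrow> ('a list \<Rightarrow> ('a, 'k) tensor) \<Rightarrow> bool" where
  "multilinear_word sc h \<longleftrightarrow>
    (\<forall>u a b v. teq sc (h (u @ [a + b] @ v)) (h (u @ [a] @ v) + h (u @ [b] @ v))) \<and>
    (\<forall>u c a v. teq sc (h (u @ [sc c a] @ v)) (smul c (h (u @ [a] @ v))))"

lemma nullT_lin_ext: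
  assumes "multilinear sc f" "nullT sc p"
  shows "nullT sc (lin_ext f p)"
  using assms(2)
proof (induction rule: nullT.induct)
  case null_zero
  then show ?case by (simp add: nullT.null_zero)
next
  case (null_add_rel Bs u a b v Cs)
  then show ?case
    using assms(1) unfolding multilinear_def teq_def by (simp add: lin_ext_diff lin_ext_add diff_diff_eq)
next
  case (null_smul_rel Bs u c a v Cs)
  then show ?case
    using assms(1) unfolding multilinear_def teq_def by (simp add: lin_ext_diff lin_ext_smul)
next
  case (null_add p q)
  then show ?case by (simp add: lin_ext_add nullT.null_add)
next
  case (null_smul p c)
  then show ?case by (simp add: lin_ext_smul nullT.null_smul)
qed

lemma teq_lin_ext: "multilinear sc f \<Longrightarrow> teq sc p q \<Longrightarrow> teq sc (lin_ext f p) (lin_ext f q)"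
  unfolding teq_def lin_ext_diff[symmetric] by (rule nullT_lin_ext)

lemma teq_bilin_ext_left:
  assumes "\<And>J. multilinear sc (\<lambda>I. g I J)" "teq sc p p'"
  shows "teq sc (bilin_ext g p q) (bilin_ext g p' q)"
proof -
  have "multilinear sc (\<lambda>I. lin_ext (g I) q)"
    using assms(1) unfolding multilinear_def lin_ext_fun_add[symmetric] lin_ext_fun_smul[symmetric]
    by (auto intro!: teq_lin_ext_fun)
  then show ?thesis
    unfolding bilin_ext_lin_ext using assms(2) by (rule teq_lin_ext)
qed

lemma teq_bilin_ext_right:
  "(\<And>I. multilinear sc (g I)) \<Longrightarrow> teq sc q q' \<Longrightarrow> teq sc (bilin_ext g p q) (bilin_ext g p q')"
  unfolding bilin_ext_lin_ext by (intro teq_lin_ext_fun teq_lin_ext)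

lemma teq_bilin_ext:
  "(\<And>J. multilinear sc (\<lambda>I. g I J)) \<Longrightarrow> (\<And>I. multilinear sc (g I))
   \<Longrightarrow> teq sc p p' \<Longrightarrow> teq sc q q' \<Longrightarrow> teq sc (bilin_ext g p q) (bilin_ext g p' q')"
  by (rule teq_trans[OF teq_bilin_ext_left teq_bilin_ext_right])

definition on1 :: "('a list \<Rightarrow> ('b \<Rightarrow>\<^sub>0 'k::zero)) \<Rightarrow> 'a list list \<Rightarrow> ('b \<Rightarrow>\<^sub>0 'k)" where
  "on1 h I = (case I of [w] \<Rightarrow> h w | _ \<Rightarrow> 0)"

definition on2 :: "('a list \<Rightarrow> 'a list \<Rightarrow> ('b \<Rightarrow>\<^sub>0 'k::zero)) \<Rightarrow> 'a list list \<Rightarrow> ('b \<Rightarrow>\<^sub>0 'k)" where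
  "on2 h I = (case I of [u, v] \<Rightarrow> h u v | _ \<Rightarrow> 0)"

definition on3 ::
    "('a list \<Rightarrow> 'a list \<Rightarrow> 'a list \<Rightarrow> ('b \<Rightarrow>\<^sub>0 'k::zero)) \<Rightarrow> 'a list list \<Rightarrow> ('b \<Rightarrow>\<^sub>0 'k)" where
  "on3 h I = (case I of [a, b, c] \<Rightarrow> h a b c | _ \<Rightarrow> 0)"

lemma on1_single [simp]: "on1 h [w] = h w"
  by (simp add: on1_def)

lemma on2_pair [simp]: "on2 h [u, v] = h u v"
  by (simp add: on2_def)

lemma on3_triple [simp]: "on3 h [a, b, c] = h a b c"
  by (simp add: on3_def)

lemma on1_other: "(\<And>w. I \<noteq> [w]) \<Longrightarrow> on1 h I = 0"
  by (auto simp: on1_def split: list.splits)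

lemma on1_zero [simp]: "on1 (\<lambda>w. 0) I = 0"
  by (simp add: on1_def split: list.splits)

lemma on2_other: "(\<And>u v. I \<noteq> [u, v]) \<Longrightarrow> on2 h I = 0"
  by (auto simp: on2_def split: list.splits)

lemma on3_other: "(\<And>a b c. I \<noteq> [a, b, c]) \<Longrightarrow> on3 h I = 0"
  by (auto simp: on3_def split: list.splits)

lemma one_block_eq: "Bs @ [X] @ Cs = [w] \<longleftrightarrow> Bs = [] \<and> Cs = [] \<and> X = w"
  by (cases Bs) auto

lemma two_block_cases:
  obtains v where "Bs = []" "Cs = [v]" | u where "Bs = [u]" "Cs = []"
  | "\<forall>Z u v. Bs @ [Z] @ Cs \<noteq> [u, v]"
  by (cases Bs; cases Cs) (auto simp: Cons_eq_append_conv)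

lemma three_block_cases:
  obtains b c where "Bs = []" "Cs = [b, c]" | a c where "Bs = [a]" "Cs = [c]"
  | a b where "Bs = [a, b]" "Cs = []" | "\<forall>Z a b c. Bs @ [Z] @ Cs \<noteq> [a, b, c]"
proof (cases "length Bs + length Cs = 2")
  case True
  have len2: "length xs = 2 \<Longrightarrow> \<exists>a b. xs = [a, b]" for xs :: "'a list"
    by (cases xs; cases "tl xs") auto
  have len1: "length xs = 1 \<Longrightarrow> \<exists>a. xs = [a]" for xs :: "'a list"
    by (cases xs) auto
  from True consider "length Bs = 0" "length Cs = 2" | "length Bs = 1" "length Cs = 1"
    | "length Bs = 2" "length Cs = 0"
    by linarith
  then show ?thesis
  proof cases
    case 1
    then show ?thesis using that(1) len2[of Cs] by auto
  next
    case 2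
    then show ?thesis using that(2) len1[of Bs] len1[of Cs] by auto
  next
    case 3
    then show ?thesis using that(3) len2[of Bs] by auto
  qed
next
  case False
  have "Bs @ [Z] @ Cs \<noteq> [a, b, c]" for Z a b c
  proof
    assume "Bs @ [Z] @ Cs = [a, b, c]"
    then have "length (Bs @ [Z] @ Cs) = 3" by simp
    with False show False by simp
  qed
  then show ?thesis using that(4) by blast
qed

lemma multilinear_on1:
  assumes "multilinear_word sc h"
  shows "multilinear sc (on1 h)"
proof -
  have zero: "on1 h (Bs @ [X] @ Cs) = 0" if "\<not> (Bs = [] \<and> Cs = [])" for Bs X Cs
    using that one_block_eq[of Bs X Cs] by (intro on1_other) auto
  show ?thesis unfolding multilinear_def
  proof (intro conjI allI)
    fix Bs u a b v Cs
    show "teq sc (on1 h (Bs @ [u @ [a + b] @ v] @ Cs))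
        (on1 h (Bs @ [u @ [a] @ v] @ Cs) + on1 h (Bs @ [u @ [b] @ v] @ Cs))"
      using assms zero[of Bs Cs] unfolding multilinear_word_def by (cases "Bs = [] \<and> Cs = []") auto
  next
    fix Bs u c a v Cs
    show "teq sc (on1 h (Bs @ [u @ [sc c a] @ v] @ Cs)) (smul c (on1 h (Bs @ [u @ [a] @ v] @ Cs)))"
      using assms zero[of Bs Cs] unfolding multilinear_word_def by (cases "Bs = [] \<and> Cs = []") auto
  qed
qed

lemma multilinear_on2:
  assumes "\<And>v. multilinear_word sc (\<lambda>u. h u v)" "\<And>u. multilinear_word sc (h u)"
  shows "multilinear sc (on2 h)"
  unfolding multilinear_def
proof (intro conjI allI)
  fix Bs u a b v Cs
  show "teq sc (on2 h (Bs @ [u @ [a + b] @ v] @ Cs))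
      (on2 h (Bs @ [u @ [a] @ v] @ Cs) + on2 h (Bs @ [u @ [b] @ v] @ Cs))"
    by (cases Bs Cs rule: two_block_cases) (use assms in \<open>auto simp: multilinear_word_def on2_other\<close>)
next
  fix Bs u c a v Cs
  show "teq sc (on2 h (Bs @ [u @ [sc c a] @ v] @ Cs)) (smul c (on2 h (Bs @ [u @ [a] @ v] @ Cs)))"
    by (cases Bs Cs rule: two_block_cases) (use assms in \<open>auto simp: multilinear_word_def on2_other\<close>)
qed

lemma multilinear_on3:
  assumes "\<And>b c. multilinear_word sc (\<lambda>a. h a b c)" "\<And>a c. multilinear_word sc (\<lambda>b. h a b c)"
    and "\<And>a b. multilinear_word sc (h a b)"
  shows "multilinear sc (on3 h)"
  unfolding multilinear_def
proof (intro conjI allI)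
  fix Bs u a b v Cs
  show "teq sc (on3 h (Bs @ [u @ [a + b] @ v] @ Cs))
      (on3 h (Bs @ [u @ [a] @ v] @ Cs) + on3 h (Bs @ [u @ [b] @ v] @ Cs))"
    by (cases Bs Cs rule: three_block_cases) (use assms in \<open>auto simp: multilinear_word_def on3_other\<close>)
next
  fix Bs u c a v Cs
  show "teq sc (on3 h (Bs @ [u @ [sc c a] @ v] @ Cs)) (smul c (on3 h (Bs @ [u @ [a] @ v] @ Cs)))"
    by (cases Bs Cs rule: three_block_cases) (use assms in \<open>auto simp: multilinear_word_def on3_other\<close>)
qed

lemma multilinear_word_pt: "multilinear_word sc (\<lambda>w. pt (Bs @ [u @ w @ v] @ Cs))"
  unfolding multilinear_word_def
  using teq_rel_add[of sc Bs "u @ _" _ _ "_ @ v" Cs] teq_rel_smul[of sc Bs "u @ _" _ _ "_ @ v" Cs]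
  by simp

lemma multilinear_word_zero: "multilinear_word sc (\<lambda>w. 0)"
  by (simp add: multilinear_word_def)

lemma multilinear_zero: "multilinear sc (\<lambda>I. 0)"
  by (simp add: multilinear_def)

lemma multilinear_word_bilin_ext1:
  "(\<And>J. multilinear sc (\<lambda>I. g I J)) \<Longrightarrow> multilinear_word sc h
   \<Longrightarrow> multilinear_word sc (\<lambda>w. bilin_ext g (h w) q)"
  unfolding multilinear_word_def by (metis bilin_ext_add1 bilin_ext_smul1 teq_bilin_ext_left)

lemma multilinear_word_bilin_ext2:
  "(\<And>I. multilinear sc (g I)) \<Longrightarrow> multilinear_word sc h
   \<Longrightarrow> multilinear_word sc (\<lambda>w. bilin_ext g p (h w))"
  unfolding multilinear_word_def by (metis bilin_ext_add2 bilin_ext_smul2 teq_bilin_ext_right)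

lemma multilinear_word_on1_param:
  "(\<And>v. multilinear_word sc (\<lambda>u. g u v)) \<Longrightarrow> multilinear_word sc (\<lambda>u. on1 (g u) J)"
  by (cases "\<exists>w. J = [w]") (auto simp: on1_other multilinear_word_zero)

lemma multilinear_word_on2_param:
  "(\<And>v v'. multilinear_word sc (\<lambda>u. g u v v')) \<Longrightarrow> multilinear_word sc (\<lambda>u. on2 (g u) J)"
  by (cases "\<exists>w w'. J = [w, w']") (auto simp: on2_other multilinear_word_zero)

lemma multilinear_word_on3_param:
  "(\<And>v v' v''. multilinear_word sc (\<lambda>u. g u v v' v'')) \<Longrightarrow> multilinear_word sc (\<lambda>u. on3 (g u) J)"
  by (cases "\<exists>w w' w''. J = [w, w', w'']") (auto simp: on3_other multilinear_word_zero)

lemma multilinear_on1_param: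
  "(\<And>u. multilinear sc (G u)) \<Longrightarrow> multilinear sc (\<lambda>J. on1 (\<lambda>u. G u J) I)"
  by (cases "\<exists>w. I = [w]") (auto simp: on1_other multilinear_zero)

lemma multilinear_on2_param:
  "(\<And>u v. multilinear sc (G u v)) \<Longrightarrow> multilinear sc (\<lambda>J. on2 (\<lambda>u v. G u v J) I)"
  by (cases "\<exists>w w'. I = [w, w']") (auto simp: on2_other multilinear_zero)

lemma multilinear_on3_param:
  "(\<And>a b c. multilinear sc (G a b c)) \<Longrightarrow> multilinear sc (\<lambda>J. on3 (\<lambda>a b c. G a b c J) I)"
  by (cases "\<exists>w w' w''. I = [w, w', w'']") (auto simp: on3_other multilinear_zero)


lemma prepend_on1: "prepend c = lin_ext (on1 (\<lambda>w. pt [c # w]))"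
  by (simp add: prepend_def on1_def[abs_def])

lemma diamond_on1: "diamond p q = bilin_ext (\<lambda>I J. on1 (\<lambda>u. on1 (\<lambda>v. dw u v) J) I) p q"
  unfolding diamond_def by (intro bilin_ext_cong) (auto simp: on1_def split: list.splits)

lemma bullet_on2:
  "bullet p q = bilin_ext (\<lambda>I J. on2 (\<lambda>u v. on2 (\<lambda>u' v'. tens (dw u u') (dw v v')) J) I) p q"
  unfolding bullet_def by (intro bilin_ext_cong) (auto simp: on2_def split: list.splits)

lemma id_Pr_on2: "id_Pr = lin_ext (on2 (\<lambda>u v. pt [u, 1 # v]))"
  by (simp add: id_Pr_def on2_def[abs_def])

lemma DeltaT_on1: "DeltaT Delta = lin_ext (on1 (DTw Delta))"
  by (simp add: DeltaT_def on1_def[abs_def])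

lemma tmap_left_on2: "tmap_left f = lin_ext (on2 (\<lambda>u v. tens (f u) (pt [v])))"
  by (simp add: tmap_left_def on2_def[abs_def])

lemma tmap_right_on2: "tmap_right f = lin_ext (on2 (\<lambda>u v. tens (pt [u]) (f v)))"
  by (simp add: tmap_right_def on2_def[abs_def])

lemma counit_left_on2: "counit_left e = lin_ext (on2 (\<lambda>u v. smul (e u) (pt [v])))"
  by (simp add: counit_left_def on2_def[abs_def])

lemma prepend_pt [simp]: "prepend c (pt [w]) = pt [c # w]"
  by (simp add: prepend_on1)

lemma Pr_pt [simp]: "Pr (pt [w]) = pt [1 # w]"
  by (simp add: Pr_def)

lemma diamond_pt: "diamond (pt [u]) (pt [v]) = dw u v"
  by (simp add: diamond_on1)

lemma tens_pt [simp]: "tens (pt I) (pt J) = pt (I @ J)"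
  by (simp add: tens_def)

lemma tens_pt_pt: "tens (pt [u]) (pt [v]) = pt [u, v]"
  by simp

lemma bullet_pt [simp]: "bullet (pt [u, v]) (pt [u', v']) = tens (dw u u') (dw v v')"
  by (simp add: bullet_on2)

lemma id_Pr_pt [simp]: "id_Pr (pt [u, v]) = pt [u, 1 # v]"
  by (simp add: id_Pr_on2)

lemma DeltaT_pt [simp]: "DeltaT Delta (pt [w]) = DTw Delta w"
  by (simp add: DeltaT_on1)

lemma tmap_left_pt [simp]: "tmap_left f (pt [u, v]) = tens (f u) (pt [v])"
  by (simp add: tmap_left_on2)

lemma tmap_right_pt [simp]: "tmap_right f (pt [u, v]) = tens (pt [u]) (f v)"
  by (simp add: tmap_right_on2)

lemma counit_left_pt [simp]: "counit_left e (pt [u, v]) = smul (e u) (pt [v])"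
  by (simp add: counit_left_on2)

lemma prepend_pt_other: "(\<And>w. I \<noteq> [w]) \<Longrightarrow> prepend c (pt I) = 0"
  by (simp add: prepend_on1 on1_other)

lemma diamond_pt_other1: "(\<And>u. I \<noteq> [u]) \<Longrightarrow> diamond (pt I) q = 0"
  by (simp add: diamond_on1 bilin_ext_lin_ext on1_other lin_ext_fun_zero)

lemma diamond_pt_other2: "(\<And>u. I \<noteq> [u]) \<Longrightarrow> diamond p (pt I) = 0"
  by (simp add: diamond_on1 bilin_ext_lin_ext on1_other lin_ext_fun_zero)

lemma prepend_linear:
  "prepend c (p + q) = prepend c p + prepend c q" "prepend c (p - q) = prepend c p - prepend c q"
  "prepend c (smul d p) = smul d (prepend c p)" "prepend c 0 = 0" "prepend c (- p) = - prepend c p"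
  by (simp_all add: prepend_on1 lin_ext_linear)

lemma Pr_linear:
  "Pr (p + q) = Pr p + Pr q" "Pr (p - q) = Pr p - Pr q"
  "Pr (smul d p) = smul d (Pr p)" "Pr 0 = 0" "Pr (- p) = - Pr p"
  by (simp_all add: Pr_def prepend_linear)

lemma id_Pr_linear:
  "id_Pr (p + q) = id_Pr p + id_Pr q" "id_Pr (p - q) = id_Pr p - id_Pr q"
  "id_Pr (smul d p) = smul d (id_Pr p)" "id_Pr 0 = 0" "id_Pr (- p) = - id_Pr p"
  by (simp_all add: id_Pr_on2 lin_ext_linear)

lemma DeltaT_linear:
  "DeltaT D (p + q) = DeltaT D p + DeltaT D q" "DeltaT D (p - q) = DeltaT D p - DeltaT D q"
  "DeltaT D (smul d p) = smul d (DeltaT D p)" "DeltaT D 0 = 0" "DeltaT D (- p) = - DeltaT D p"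
  by (simp_all add: DeltaT_on1 lin_ext_linear)

lemma tmap_left_linear:
  "tmap_left f (p + q) = tmap_left f p + tmap_left f q"
  "tmap_left f (p - q) = tmap_left f p - tmap_left f q"
  "tmap_left f (smul d p) = smul d (tmap_left f p)" "tmap_left f 0 = 0"
  by (simp_all add: tmap_left_on2 lin_ext_linear)

lemma tmap_right_linear:
  "tmap_right f (p + q) = tmap_right f p + tmap_right f q"
  "tmap_right f (p - q) = tmap_right f p - tmap_right f q"
  "tmap_right f (smul d p) = smul d (tmap_right f p)" "tmap_right f 0 = 0"
  by (simp_all add: tmap_right_on2 lin_ext_linear)

lemma counit_left_linear:
  "counit_left f (p + q) = counit_left f p + counit_left f q"
  "counit_left f (p - q) = counit_left f p - counit_left f q"
  "counit_left f (smul d p) = smul d (counit_left f p)" "counit_left f 0 = 0"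
  by (simp_all add: counit_left_on2 lin_ext_linear)

lemma diamond_linear:
  "diamond (p + p') q = diamond p q + diamond p' q" "diamond p (q + q') = diamond p q + diamond p q'"
  "diamond (p - p') q = diamond p q - diamond p' q" "diamond p (q - q') = diamond p q - diamond p q'"
  "diamond (smul c p) q = smul c (diamond p q)" "diamond p (smul c q) = smul c (diamond p q)"
  "diamond 0 q = 0" "diamond p 0 = 0" "diamond (- p) q = - diamond p q"
  "diamond p (- q) = - diamond p q"
  by (simp_all add: diamond_on1 bilin_ext_linear)

lemma tens_linear:
  "tens (p + p') q = tens p q + tens p' q" "tens p (q + q') = tens p q + tens p q'"
  "tens (p - p') q = tens p q - tens p' q" "tens p (q - q') = tens p q - tens p q'"
  "tens (smul c p) q = smul c (tens p q)" "tens p (smul c q) = smul c (tens p q)"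
  "tens 0 q = 0" "tens p 0 = 0"
  by (simp_all add: tens_def bilin_ext_linear)

lemma bullet_linear:
  "bullet (p + p') q = bullet p q + bullet p' q" "bullet p (q + q') = bullet p q + bullet p q'"
  "bullet (p - p') q = bullet p q - bullet p' q" "bullet p (q - q') = bullet p q - bullet p q'"
  "bullet (smul c p) q = smul c (bullet p q)" "bullet p (smul c q) = smul c (bullet p q)"
  "bullet 0 q = 0" "bullet p 0 = 0"
  by (simp_all add: bullet_on2 bilin_ext_linear)

lemma epsT_extend:
  assumes "Poly_Mapping.keys p \<subseteq> K" "finite K"
  shows "epsT e p = (\<Sum>I\<in>K. Poly_Mapping.lookup p I * (case I of [w] \<Rightarrow> epsw e w | _ \<Rightarrow> 0))"
  unfolding epsT_def using assms by (intro sum.mono_neutral_cong_left) (auto simp: in_keys_iff)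

lemma epsT_add: "epsT e (p + q) = epsT e p + epsT e q"
  using keys_add[of p q]
  by (simp add: epsT_extend[of _ "Poly_Mapping.keys p \<union> Poly_Mapping.keys q"] lookup_add
      distrib_right sum.distrib)

lemma epsT_smul: "epsT e (smul c p) = c * epsT e p"
  using keys_smul_subset[of c p]
  by (simp add: epsT_extend[of _ "Poly_Mapping.keys p"] sum_distrib_left mult.assoc)

lemma epsT_0: "epsT e 0 = 0"
  by (simp add: epsT_def)

lemma epsT_diff: "epsT e (p - q) = epsT e p - epsT e q"
  using epsT_add[of e "p - q" q] by simp

lemma epsT_pt: "epsT e (pt [w]) = epsw e w"
  by (simp add: epsT_def pt_def)

lemma epsT_pt_other: "(\<And>w. I \<noteq> [w]) \<Longrightarrow> epsT e (pt I) = 0"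
  by (auto simp: epsT_def split: list.splits)

lemmas epsT_linear = epsT_add epsT_smul epsT_0 epsT_diff epsT_pt


lemma dw_simps:
  "dw [a] [b] = pt [[a * b]]"
  "w \<noteq> [] \<Longrightarrow> dw [a] (b # w) = pt [(a * b) # w]"
  "w \<noteq> [] \<Longrightarrow> dw (a # w) [b] = pt [(a * b) # w]"
  "u \<noteq> [] \<Longrightarrow> v \<noteq> [] \<Longrightarrow>
    dw (a # u) (b # v) = prepend (a * b) (dw u (1 # v) + dw (1 # u) v - prepend 1 (dw u v))"
  by (cases w; simp; fail)+ (cases u; cases v; simp)

lemma dw_Nil_right [simp]: "dw v [] = 0"
  by (cases v) auto

lemma dw_commute: "dw u v = dw v u"
  by (induction u v rule: dw.induct) (simp_all add: mult.commute add.commute)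

lemma dw_single_left: "w \<noteq> [] \<Longrightarrow> dw [a] w = pt [(a * hd w) # tl w]"
  by (cases w; cases "tl w") (auto simp: dw_simps)


section \<open>Well-definedness on tensors\<close>

definition linear_in_letter ::
    "('k::comm_ring_1 \<Rightarrow> 'a::comm_ring_1 \<Rightarrow> 'a) \<Rightarrow> ('a \<Rightarrow> ('a, 'k) tensor) \<Rightarrow> bool" where
  "linear_in_letter sc F \<longleftrightarrow>
    (\<forall>x y. teq sc (F (x + y)) (F x + F y)) \<and> (\<forall>c x. teq sc (F (sc c x)) (smul c (F x)))"

lemma multilinear_word_iff: "multilinear_word sc h \<longleftrightarrow> (\<forall>u v. linear_in_letter sc (\<lambda>t. h (u @ [t] @ v)))"
  by (auto simp: multilinear_word_def linear_in_letter_def)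

lemma linear_in_letter_pt: "linear_in_letter sc (\<lambda>t. pt (Bs @ [u @ [t] @ v] @ Cs))"
  unfolding linear_in_letter_def
  using teq_rel_add[of sc Bs u _ _ v Cs] teq_rel_smul[of sc Bs u _ _ v Cs] by simp

lemma linear_in_letter_add:
  "linear_in_letter sc F \<Longrightarrow> linear_in_letter sc G \<Longrightarrow> linear_in_letter sc (\<lambda>t. F t + G t)"
  unfolding linear_in_letter_def
  by (metis (no_types, lifting) add.assoc add.commute smul_add_right teq_add)

lemma linear_in_letter_diff:
  "linear_in_letter sc F \<Longrightarrow> linear_in_letter sc G \<Longrightarrow> linear_in_letter sc (\<lambda>t. F t - G t)"
proof -
  assume F: "linear_in_letter sc F" and G: "linear_in_letter sc G"
  show ?thesis unfolding linear_in_letter_def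
  proof (intro conjI allI)
    fix x y
    have "teq sc (F (x + y) - G (x + y)) ((F x + F y) - (G x + G y))"
      using F G unfolding linear_in_letter_def by (intro teq_diff) simp_all
    then show "teq sc (F (x + y) - G (x + y)) (F x - G x + (F y - G y))"
      by (simp add: algebra_simps)
  next
    fix c x
    show "teq sc (F (sc c x) - G (sc c x)) (smul c (F x - G x))"
      using F G unfolding linear_in_letter_def by (simp add: smul_diff_right teq_diff)
  qed
qed

lemma linear_in_letter_mult_right:
  assumes "k_algebra sc" "linear_in_letter sc F"
  shows "linear_in_letter sc (\<lambda>t. F (t * b))"
proof -
  have "sc c x * b = sc c (x * b)" for c x
    using assms(1) by (simp add: k_algebra_def)
  with assms(2) show ?thesis
    unfolding linear_in_letter_def by (simp add: distrib_right)
qed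

lemma linear_in_letter_teq_map:
  assumes "\<And>p q. teq sc p q \<Longrightarrow> teq sc (f p) (f q)"
    and "\<And>p q. f (p + q) = f p + f q" "\<And>c p. f (smul c p) = smul c (f p)"
    and "linear_in_letter sc F"
  shows "linear_in_letter sc (\<lambda>t. f (F t))"
  using assms unfolding linear_in_letter_def by metis

lemma teq_prepend: "teq sc p q \<Longrightarrow> teq sc (prepend a p) (prepend a q)"
  unfolding prepend_on1
  by (rule teq_lin_ext[OF multilinear_on1]) (use multilinear_word_pt[of sc "[]" "[a]" "[]" "[]"] in simp)

lemma teq_Pr: "teq sc p q \<Longrightarrow> teq sc (Pr p) (Pr q)"
  unfolding Pr_def by (rule teq_prepend)

lemma linear_in_letter_prepend:
  "linear_in_letter sc F \<Longrightarrow> linear_in_letter sc (\<lambda>t. prepend c (F t))"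
  by (rule linear_in_letter_teq_map) (auto intro: teq_prepend simp: prepend_linear)

lemma linear_in_letter_prepend_letter: "linear_in_letter sc (\<lambda>t. prepend t R)"
proof -
  have "linear_in_letter sc (\<lambda>t. on1 (\<lambda>w. pt [t # w]) I)" for I
    using linear_in_letter_pt[of sc "[]" "[]" _ "[]"]
    by (cases "\<exists>w. I = [w]") (auto simp: on1_other linear_in_letter_def)
  then have "linear_in_letter sc (\<lambda>t. lin_ext (on1 (\<lambda>w. pt [t # w])) R)"
    unfolding linear_in_letter_def
    by (auto simp flip: lin_ext_fun_add lin_ext_fun_smul intro!: teq_lin_ext_fun)
  then show ?thesis by (simp add: prepend_on1)
qed

lemma linear_in_letter_dw:
  assumes "k_algebra sc"
  shows "linear_in_letter sc (\<lambda>t. dw (u1 @ [t] @ u2) v)"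
proof (induction "length u1 + length u2 + length v" arbitrary: u1 u2 v rule: less_induct)
  case less
  have pt_letter: "linear_in_letter sc (\<lambda>t. pt [u @ [t * b] @ w])" for u b w
    by (rule linear_in_letter_mult_right[OF assms, of "\<lambda>t. pt [u @ [t] @ w]"])
      (use linear_in_letter_pt[of sc "[]" _ _ "[]"] in simp)
  consider "v = []" | b v' where "u1 = []" "v = b # v'" | z u1' b v' where "u1 = z # u1'" "v = b # v'"
    by (cases v; cases u1) auto
  then show ?case
  proof cases
    case 1
    then show ?thesis by (simp add: linear_in_letter_def)
  next
    case (2 b v')
    have prepend_letter: "linear_in_letter sc (\<lambda>t. prepend (t * b) R)" for R
      by (rule linear_in_letter_mult_right[OF assms linear_in_letter_prepend_letter])
    show ?thesis
      using 2 pt_letter[of "[]" b "[]"] pt_letter[of "[]" b v'] pt_letter[of "[]" b u2] prepend_letter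
      by (cases "u2 = []"; cases "v' = []") (simp_all add: dw_simps)
  next
    case (3 z u1' b v')
    show ?thesis
    proof (cases "v' = []")
      case True
      then show ?thesis
        using 3 linear_in_letter_pt[of sc "[]" "z * b # u1'" u2 "[]"] by (simp add: dw_simps)
    next
      case False
      have "linear_in_letter sc (\<lambda>t. dw (u1' @ [t] @ u2) (1 # v') + dw ((1 # u1') @ [t] @ u2) v'
          - prepend 1 (dw (u1' @ [t] @ u2) v'))"
        using 3 False
        by (intro linear_in_letter_add linear_in_letter_diff linear_in_letter_prepend less) auto
      then show ?thesis
        using 3 False by (simp add: dw_simps linear_in_letter_prepend)
    qed
  qed
qed

lemma multilinear_word_dw_left: "k_algebra sc \<Longrightarrow> multilinear_word sc (\<lambda>u. dw u v)"
  unfolding multilinear_word_iff by (blast intro: linear_in_letter_dw)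

lemma multilinear_word_dw_right: "k_algebra sc \<Longrightarrow> multilinear_word sc (\<lambda>v. dw u v)"
  using multilinear_word_dw_left[of sc u] by (simp add: dw_commute)

lemma multilinear_append_left: "multilinear sc (\<lambda>I. pt (I @ J))"
  unfolding multilinear_def
  using teq_rel_add[of sc _ _ _ _ _ "_ @ J"] teq_rel_smul[of sc _ _ _ _ _ "_ @ J"] by simp

lemma multilinear_append_right: "multilinear sc (\<lambda>J. pt (I @ J))"
  unfolding multilinear_def using teq_rel_add[of sc "I @ _"] teq_rel_smul[of sc "I @ _"] by simp

lemma teq_tens: "teq sc p p' \<Longrightarrow> teq sc q q' \<Longrightarrow> teq sc (tens p q) (tens p' q')"
  unfolding tens_def
  by (rule teq_bilin_ext) (rule multilinear_append_left, rule multilinear_append_right)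

lemma multilinear_word_tens_left: "multilinear_word sc h \<Longrightarrow> multilinear_word sc (\<lambda>w. tens (h w) q)"
  unfolding tens_def by (rule multilinear_word_bilin_ext1) (rule multilinear_append_left)

lemma multilinear_word_tens_right: "multilinear_word sc h \<Longrightarrow> multilinear_word sc (\<lambda>w. tens p (h w))"
  unfolding tens_def by (rule multilinear_word_bilin_ext2) (rule multilinear_append_right)

lemma teq_diamond:
  assumes "k_algebra sc" "teq sc p p'" "teq sc q q'"
  shows "teq sc (diamond p q) (diamond p' q')"
  unfolding diamond_on1
  by (rule teq_bilin_ext[OF _ _ assms(2,3)];
      intro multilinear_on1 multilinear_word_on1_param multilinear_on1_param
        multilinear_word_dw_left multilinear_word_dw_right assms(1))

lemma teq_bullet:
  assumes "k_algebra sc" "teq sc p p'" "teq sc q q'"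
  shows "teq sc (bullet p q) (bullet p' q')"
  unfolding bullet_on2
  by (rule teq_bilin_ext[OF _ _ assms(2,3)];
      intro multilinear_on2 multilinear_word_on2_param multilinear_on2_param multilinear_word_tens_left
        multilinear_word_tens_right multilinear_word_dw_left multilinear_word_dw_right assms(1))

lemma teq_id_Pr: "teq sc p q \<Longrightarrow> teq sc (id_Pr p) (id_Pr q)"
  unfolding id_Pr_on2
  by (rule teq_lin_ext, rule multilinear_on2)
    (use multilinear_word_pt[of sc "[]" "[]" "[]" "[_]"] multilinear_word_pt[of sc "[_]" "[1]" "[]" "[]"]
      in simp_all)

lemma epsT_nullT:
  assumes "\<And>a b. eps (a + b) = eps a + eps b" "\<And>c a. eps (sc c a) = c * eps a" "nullT sc p"
  shows "epsT eps p = 0"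
  using assms(3)
proof (induction rule: nullT.induct)
  case (null_add_rel Bs u a b v Cs)
  show ?case
  proof (cases "Bs = [] \<and> Cs = []")
    case True
    then show ?thesis by (simp add: epsT_linear epsw_def assms(1) algebra_simps)
  next
    case False
    then have "\<And>w. Bs @ [X] @ Cs \<noteq> [w]" for X using one_block_eq[of Bs X Cs] by auto
    then show ?thesis by (simp add: epsT_linear epsT_pt_other del: append.simps append_Cons append_Nil)
  qed
next
  case (null_smul_rel Bs u c a v Cs)
  show ?case
  proof (cases "Bs = [] \<and> Cs = []")
    case True
    then show ?thesis by (simp add: epsT_linear epsw_def assms(2) algebra_simps)
  next
    case False
    then have "\<And>w. Bs @ [X] @ Cs \<noteq> [w]" for X using one_block_eq[of Bs X Cs] by auto
    then show ?thesis by (simp add: epsT_linear epsT_pt_other del: append.simps append_Cons append_Nil)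
  qed
qed (simp_all add: epsT_linear)


section \<open>The shuffle algebra\<close>

definition sh_keys :: "'a list list set" where
  "sh_keys = {[w] | w. w \<noteq> []}"

lemma is_sh_iff: "is_sh p \<longleftrightarrow> Poly_Mapping.keys p \<subseteq> sh_keys"
  by (auto simp: is_sh_def sh_keys_def)

lemma keys_prepend_subset: "Poly_Mapping.keys (prepend c p) \<subseteq> sh_keys"
  unfolding prepend_on1
  using keys_lin_ext_subset[of "on1 (\<lambda>w. pt [c # w])" p]
  by (auto simp: sh_keys_def on1_def split: list.splits)

lemma keys_dw_subset: "Poly_Mapping.keys (dw u v) \<subseteq> sh_keys"
proof (induction u v rule: dw.induct)
  case (4 a c u b d v)
  then show ?case using keys_prepend_subset by simp
qed (auto simp: sh_keys_def)

lemma keys_diamond_subset: "Poly_Mapping.keys (diamond p q) \<subseteq> sh_keys"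
  unfolding diamond_on1
  using keys_bilin_ext_subset[of "\<lambda>I J. on1 (\<lambda>u. on1 (dw u) J) I" p q] keys_dw_subset
  by (fastforce simp: on1_def split: list.splits)

lemma is_sh_diamond: "is_sh (diamond p q)"
  and is_sh_prepend: "is_sh (prepend c p)"
  and is_sh_Pr: "is_sh (Pr p)"
  and is_sh_dw: "is_sh (dw u v)"
  by (simp_all add: is_sh_iff keys_diamond_subset keys_prepend_subset keys_dw_subset Pr_def)

lemma is_sh_pt: "w \<noteq> [] \<Longrightarrow> is_sh (pt [w])"
  by (simp add: is_sh_iff sh_keys_def)

lemma is_sh_add: "is_sh p \<Longrightarrow> is_sh q \<Longrightarrow> is_sh (p + q)"
  and is_sh_diff: "is_sh p \<Longrightarrow> is_sh q \<Longrightarrow> is_sh (p - q)"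
  and is_sh_smul: "is_sh p \<Longrightarrow> is_sh (smul c p)"
  using keys_add[of p q] keys_diff[of p q] keys_smul_subset[of c p] by (auto simp: is_sh_iff)

lemmas is_sh_intros = is_sh_diamond is_sh_prepend is_sh_Pr is_sh_dw is_sh_add is_sh_diff is_sh_smul

lemma sh_induct [consumes 1, case_names zero sing add]:
  assumes "is_sh p" "P 0" "\<And>w c. w \<noteq> [] \<Longrightarrow> P (smul c (pt [w]))"
    and "\<And>a b. P a \<Longrightarrow> P b \<Longrightarrow> P (a + b)"
  shows "P p"
  using assms(1)[unfolded is_sh_iff]
  by (induction p rule: lin_induct) (use assms(2-) in \<open>auto simp: sh_keys_def\<close>)

lemma sh_bilin_induct [consumes 2, case_names zero1 zero2 sing add1 add2]:
  assumes "is_sh p" "is_sh q"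
    and "\<And>q. P 0 q" and "\<And>p. P p 0"
    and "\<And>u v c d. u \<noteq> [] \<Longrightarrow> v \<noteq> [] \<Longrightarrow> P (smul c (pt [u])) (smul d (pt [v]))"
    and "\<And>a b q. P a q \<Longrightarrow> P b q \<Longrightarrow> P (a + b) q"
    and "\<And>a b p. P p a \<Longrightarrow> P p b \<Longrightarrow> P p (a + b)"
  shows "P p q"
  using assms(1,2)[unfolded is_sh_iff]
  by (induction p q rule: bilin_induct) (use assms(3-) in \<open>auto simp: sh_keys_def\<close>)

lemma diamond_commute: "diamond p q = diamond q p"
proof -
  have "Poly_Mapping.keys p \<subseteq> UNIV" "Poly_Mapping.keys q \<subseteq> UNIV" by simp_all
  then show ?thesis
  proof (induction p q rule: bilin_induct)
    case (sing x y c d)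
    then show ?case
      by (cases "\<exists>u. x = [u]"; cases "\<exists>v. y = [v]")
        (auto simp: diamond_linear diamond_pt_other1 diamond_pt_other2 diamond_pt dw_commute
          mult.commute)
  qed (simp_all add: diamond_linear)
qed

text \<open>Multiplying by a one-letter word only rescales the first letter of each word.\<close>

abbreviation lmult :: "'a::comm_ring_1 \<Rightarrow> ('a, 'k::comm_ring_1) tensor \<Rightarrow> ('a, 'k) tensor"
  where "lmult a p \<equiv> diamond (pt [[a]]) p"

lemma lmult_1: "is_sh X \<Longrightarrow> lmult 1 X = X"
  by (induction X rule: sh_induct) (auto simp: diamond_linear diamond_pt dw_single_left)

lemma diamond_unit_right: "is_sh X \<Longrightarrow> diamond X (pt [[1]]) = X"
  using lmult_1 diamond_commute by metis

lemma lmult_lmult: "is_sh X \<Longrightarrow> lmult a (lmult b X) = lmult (a * b) X"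
  by (induction X rule: sh_induct) (auto simp: diamond_linear diamond_pt dw_single_left mult.assoc)

lemma lmult_prepend: "lmult a (prepend c X) = prepend (a * c) X"
proof -
  have "Poly_Mapping.keys X \<subseteq> UNIV" by simp
  then show ?thesis
  proof (induction X rule: lin_induct)
    case (sing x d)
    then show ?case
      by (cases "\<exists>u. x = [u]")
        (auto simp: diamond_linear prepend_linear prepend_pt_other diamond_pt dw_single_left)
  qed (simp_all add: diamond_linear prepend_linear)
qed

lemma lmult_diamond_words:
  assumes "u \<noteq> []" "v \<noteq> []"
  shows "diamond (lmult a (pt [u])) (pt [v]) = lmult a (diamond (pt [u]) (pt [v]))"
proof -
  obtain x u' where u: "u = x # u'" using assms(1) by (cases u) auto
  obtain y v' where v: "v = y # v'" using assms(2) by (cases v) auto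
  show ?thesis
    by (cases "u' = []"; cases "v' = []")
      (simp_all add: u v diamond_pt dw_simps dw_single_left lmult_prepend mult.assoc)
qed

lemma lmult_diamond: "is_sh X \<Longrightarrow> is_sh Y \<Longrightarrow> diamond (lmult a X) Y = lmult a (diamond X Y)"
  by (induction X Y rule: sh_bilin_induct) (simp_all add: diamond_linear lmult_diamond_words)

lemma diamond_lmult: "is_sh X \<Longrightarrow> is_sh Y \<Longrightarrow> diamond X (lmult a Y) = lmult a (diamond X Y)"
  by (metis lmult_diamond diamond_commute)

lemma pt_eq_lmult:
  assumes "u \<noteq> []"
  obtains a Y where "pt [u] = lmult a Y" "is_sh Y"
    "Y = pt [[1]] \<or> (\<exists>u'. u' \<noteq> [] \<and> Y = Pr (pt [u']) \<and> length u = Suc (length u'))"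
proof -
  obtain a u' where u: "u = a # u'" using assms by (cases u) auto
  show ?thesis
  proof (cases "u' = []")
    case True
    then show ?thesis
      using that[of a "pt [[1]]"] by (simp add: u is_sh_pt diamond_pt dw_simps)
  next
    case False
    have "pt [u] = lmult a (Pr (pt [u']))"
      unfolding u Pr_def by (metis lmult_prepend prepend_pt mult_1_right)
    with False show ?thesis
      by (intro that[of a "Pr (pt [u'])"]) (auto simp: u is_sh_Pr simp del: Pr_pt)
  qed
qed

definition nij_sum :: "('a::comm_ring_1, 'k::comm_ring_1) tensor \<Rightarrow> ('a, 'k) tensor \<Rightarrow> ('a, 'k) tensor"
  where "nij_sum X Y = diamond X (Pr Y) + diamond (Pr X) Y - Pr (diamond X Y)"

lemma is_sh_nij_sum: "is_sh (nij_sum X Y)"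
  by (simp add: nij_sum_def is_sh_intros)

lemma diamond_Pr_Pr: "is_sh X \<Longrightarrow> is_sh Y \<Longrightarrow> diamond (Pr X) (Pr Y) = Pr (nij_sum X Y)"
proof (induction X Y rule: sh_bilin_induct)
  case (sing u v c d)
  then show ?case
    by (simp add: nij_sum_def diamond_linear Pr_linear diamond_pt dw_simps Pr_def prepend_linear
        smul_add_right smul_diff_right)
qed (simp_all add: nij_sum_def diamond_linear Pr_linear algebra_simps)

lemma Pr_nijenhuis:
  "is_sh x \<Longrightarrow> is_sh y \<Longrightarrow>
    diamond (Pr x) (Pr y) = Pr (diamond (Pr x) y) + Pr (diamond x (Pr y)) - Pr (Pr (diamond x y))"
  by (simp add: diamond_Pr_Pr nij_sum_def Pr_linear)

lemma teq_diamond_commute: "teq sc (diamond x y) (diamond y x)"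
  by (simp add: diamond_commute[of x y])

lemma nullT_diamond_left: "k_algebra sc \<Longrightarrow> nullT sc x \<Longrightarrow> nullT sc (diamond x y)"
  using teq_diamond[of sc x 0 y y] by (simp add: nullT_iff_teq_0 diamond_linear)

lemma nullT_diamond_right: "k_algebra sc \<Longrightarrow> nullT sc x \<Longrightarrow> nullT sc (diamond y x)"
  by (simp add: diamond_commute[of y] nullT_diamond_left)

lemma nullT_Pr: "nullT sc x \<Longrightarrow> nullT sc (Pr x)"
  using teq_Pr[of sc x 0] by (simp add: nullT_iff_teq_0 Pr_linear)

lemma is_sh_muT: "is_sh (muT c)"
  by (simp add: muT_def is_sh_smul is_sh_pt)

lemma diamond_muT: "is_sh x \<Longrightarrow> diamond (muT c) x = smul c x"
  by (simp add: muT_def diamond_linear lmult_1)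

definition Pr_products2 ::
    "('a::comm_ring_1, 'k::comm_ring_1) tensor \<Rightarrow> ('a, 'k) tensor \<Rightarrow> ('a, 'k) tensor \<Rightarrow> ('a, 'k) tensor"
  where "Pr_products2 U V W = diamond (diamond U (Pr V)) (Pr W) + diamond (diamond (Pr U) V) (Pr W)
    + diamond (diamond (Pr U) (Pr V)) W"

definition Pr_products1 ::
    "('a::comm_ring_1, 'k::comm_ring_1) tensor \<Rightarrow> ('a, 'k) tensor \<Rightarrow> ('a, 'k) tensor \<Rightarrow> ('a, 'k) tensor"
  where "Pr_products1 U V W = diamond (diamond U V) (Pr W) + diamond (diamond U (Pr V)) W
    + diamond (diamond (Pr U) V) W"

lemma diamond_Pr_Pr_Pr:
  assumes "is_sh U" "is_sh V" "is_sh W"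
  shows "diamond (diamond (Pr U) (Pr V)) (Pr W)
    = Pr (Pr_products2 U V W - Pr (Pr_products1 U V W) + Pr (Pr (diamond (diamond U V) W)))"
proof -
  have UV: "diamond (Pr U) (Pr V) = Pr (nij_sum U V)"
    using assms by (simp add: diamond_Pr_Pr)
  have "diamond (nij_sum U V) (Pr W) = diamond (diamond U (Pr V)) (Pr W)
      + diamond (diamond (Pr U) V) (Pr W) - diamond (Pr (diamond U V)) (Pr W)"
    by (simp add: nij_sum_def diamond_linear)
  also have "diamond (Pr (diamond U V)) (Pr W) = Pr (nij_sum (diamond U V) W)"
    using assms by (simp add: diamond_Pr_Pr is_sh_diamond)
  finally have "nij_sum (nij_sum U V) W
      = Pr_products2 U V W - Pr (Pr_products1 U V W) + Pr (Pr (diamond (diamond U V) W))"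
    unfolding nij_sum_def[of "nij_sum U V" W] UV[symmetric] Pr_products2_def Pr_products1_def
    by (simp add: nij_sum_def diamond_linear Pr_linear algebra_simps)
  then show ?thesis
    using assms by (simp add: UV diamond_Pr_Pr is_sh_nij_sum)
qed

text \<open>
  Both bracketings of \<open>Pr U, Pr V, Pr W\<close> expand by the Nijenhuis identity into products in which
  at least one factor lost its \<open>Pr\<close>; by commutativity the two expansions are cyclic permutations
  of each other.
\<close>

lemma diamond_assoc_Pr:
  assumes sh: "is_sh U" "is_sh V" "is_sh W"
    and lower: "\<And>X Y Z. X \<in> {U, Pr U} \<Longrightarrow> Y \<in> {V, Pr V} \<Longrightarrow> Z \<in> {W, Pr W} \<Longrightarrow>
      X = U \<or> Y = V \<or> Z = W \<Longrightarrow> diamond (diamond X Y) Z = diamond X (diamond Y Z)"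
  shows "diamond (diamond (Pr U) (Pr V)) (Pr W) = diamond (Pr U) (diamond (Pr V) (Pr W))"
proof -
  have rotate: "diamond (diamond Y Z) X = diamond (diamond X Y) Z"
    if "X \<in> {U, Pr U}" "Y \<in> {V, Pr V}" "Z \<in> {W, Pr W}" "X = U \<or> Y = V \<or> Z = W" for X Y Z
    using lower[OF that] by (simp add: diamond_commute[of _ X])
  have "Pr_products2 V W U = Pr_products2 U V W"
    unfolding Pr_products2_def using rotate[of "Pr U" V "Pr W"] rotate[of "Pr U" "Pr V" W]
      rotate[of U "Pr V" "Pr W"] by (simp add: algebra_simps)
  moreover have "Pr_products1 V W U = Pr_products1 U V W"
    unfolding Pr_products1_def using rotate[of "Pr U" V W] rotate[of U V "Pr W"]
      rotate[of U "Pr V" W] by (simp add: algebra_simps)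
  moreover have "diamond (diamond V W) U = diamond (diamond U V) W"
    using rotate[of U V W] by simp
  ultimately have "diamond (diamond (Pr V) (Pr W)) (Pr U) = diamond (diamond (Pr U) (Pr V)) (Pr W)"
    using sh by (simp add: diamond_Pr_Pr_Pr)
  then show ?thesis
    by (simp add: diamond_commute[of "Pr U"])
qed

lemma pt_or_Pr_pt_cases:
  assumes "X \<in> {pt [x], Pr (pt [x])}" "x \<noteq> []"
  obtains x' where "X = pt [x']" "x' \<noteq> []" "length x' \<le> length x + (if X = pt [x] then 0 else 1)"
proof (cases "X = pt [x]")
  case True
  then show ?thesis using assms by (intro that[of x]) auto
next
  case False
  then show ?thesis using assms by (intro that[of "1 # x"]) auto
qed

lemma diamond_assoc_words:
  assumes "u \<noteq> []" "v \<noteq> []" "w \<noteq> []"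
  shows "diamond (diamond (pt [u] :: 'a::comm_ring_1 list list \<Rightarrow>\<^sub>0 'k::comm_ring_1) (pt [v])) (pt [w])
    = diamond (pt [u]) (diamond (pt [v]) (pt [w]))"
  using assms
proof (induction "length u + length v + length w" arbitrary: u v w rule: less_induct)
  case less
  obtain a and Y1 :: "'a list list \<Rightarrow>\<^sub>0 'k" where Y1: "pt [u] = lmult a Y1" "is_sh Y1"
    "Y1 = pt [[1]] \<or> (\<exists>x. x \<noteq> [] \<and> Y1 = Pr (pt [x]) \<and> length u = Suc (length x))"
    using pt_eq_lmult[OF less.prems(1)] by metis
  obtain b and Y2 :: "'a list list \<Rightarrow>\<^sub>0 'k" where Y2: "pt [v] = lmult b Y2" "is_sh Y2"
    "Y2 = pt [[1]] \<or> (\<exists>y. y \<noteq> [] \<and> Y2 = Pr (pt [y]) \<and> length v = Suc (length y))"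
    using pt_eq_lmult[OF less.prems(2)] by metis
  obtain c and Y3 :: "'a list list \<Rightarrow>\<^sub>0 'k" where Y3: "pt [w] = lmult c Y3" "is_sh Y3"
    "Y3 = pt [[1]] \<or> (\<exists>z. z \<noteq> [] \<and> Y3 = Pr (pt [z]) \<and> length w = Suc (length z))"
    using pt_eq_lmult[OF less.prems(3)] by metis
  have "diamond (diamond Y1 Y2) Y3 = diamond Y1 (diamond Y2 Y3)"
  proof (cases "Y1 = pt [[1]] \<or> Y2 = pt [[1]] \<or> Y3 = pt [[1]]")
    case True
    then show ?thesis
      using Y1(2) Y2(2) Y3(2) by (auto simp: lmult_1 diamond_unit_right is_sh_diamond)
  next
    case False
    then obtain x y z where xyz: "x \<noteq> []" "y \<noteq> []" "z \<noteq> []"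
      "Y1 = Pr (pt [x])" "Y2 = Pr (pt [y])" "Y3 = Pr (pt [z])"
      "length u + length v + length w = length x + length y + length z + 3"
      using Y1(3) Y2(3) Y3(3) by auto
    show ?thesis
      unfolding xyz(4-6)
    proof (rule diamond_assoc_Pr; (intro is_sh_pt xyz)?)
      fix X Y Z :: "'a list list \<Rightarrow>\<^sub>0 'k"
      assume X: "X \<in> {pt [x], Pr (pt [x])}" and Y: "Y \<in> {pt [y], Pr (pt [y])}"
        and Z: "Z \<in> {pt [z], Pr (pt [z])}" and one_plain: "X = pt [x] \<or> Y = pt [y] \<or> Z = pt [z]"
      obtain x' where x': "X = pt [x']" "x' \<noteq> []"
        "length x' \<le> length x + (if X = pt [x] then 0 else 1)"
        using X xyz(1) by (rule pt_or_Pr_pt_cases)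
      obtain y' where y': "Y = pt [y']" "y' \<noteq> []"
        "length y' \<le> length y + (if Y = pt [y] then 0 else 1)"
        using Y xyz(2) by (rule pt_or_Pr_pt_cases)
      obtain z' where z': "Z = pt [z']" "z' \<noteq> []"
        "length z' \<le> length z + (if Z = pt [z] then 0 else 1)"
        using Z xyz(3) by (rule pt_or_Pr_pt_cases)
      have "length x' + length y' + length z' < length u + length v + length w"
        using x'(3) y'(3) z'(3) one_plain xyz(7) by (auto split: if_splits)
      then show "diamond (diamond X Y) Z = diamond X (diamond Y Z)"
        using less.hyps x' y' z' by simp
    qed
  qed
  then show ?case
    unfolding Y1(1) Y2(1) Y3(1)
    using Y1(2) Y2(2) Y3(2) by (simp add: lmult_diamond diamond_lmult is_sh_diamond lmult_lmult mult_ac)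
qed

lemma diamond_assoc:
  fixes x :: "'a::comm_ring_1 list list \<Rightarrow>\<^sub>0 'k::comm_ring_1"
  assumes "is_sh x" "is_sh y" "is_sh z"
  shows "diamond (diamond x y) z = diamond x (diamond y z)"
proof -
  have "\<forall>z. is_sh z \<longrightarrow> diamond (diamond x y) z = diamond x (diamond y z)"
    using assms(1,2)
  proof (induction x y rule: sh_bilin_induct)
    case (sing u v c d)
    show ?case
    proof (intro allI impI)
      fix z :: "'a list list \<Rightarrow>\<^sub>0 'k"
      assume "is_sh z"
      then show "diamond (diamond (smul c (pt [u])) (smul d (pt [v]))) z
          = diamond (smul c (pt [u])) (diamond (smul d (pt [v])) z)"
        by (induction z rule: sh_induct)
          (simp_all add: diamond_linear diamond_assoc_words sing mult_ac)
    qed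
  qed (simp_all add: diamond_linear)
  then show ?thesis using assms(3) by blast
qed

lemma epsT_prepend: "epsT eps (prepend c p) = eps c * epsT eps p"
proof -
  have "Poly_Mapping.keys p \<subseteq> UNIV" by simp
  then show ?thesis
  proof (induction p rule: lin_induct)
    case (sing x d)
    then show ?case
      by (cases "\<exists>w. x = [w]")
        (auto simp: prepend_linear epsT_linear epsT_pt_other prepend_pt_other epsw_def)
  qed (simp_all add: prepend_linear epsT_linear algebra_simps)
qed

lemma epsT_dw:
  assumes "\<And>a b. eps (a * b) = eps a * eps b" "eps 1 = 1"
  shows "u \<noteq> [] \<Longrightarrow> v \<noteq> [] \<Longrightarrow> epsT eps (dw u v) = epsw eps u * epsw eps v"
proof (induction u v rule: dw.induct)
  case (4 a c u b d v)
  then show ?case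
    by (simp add: epsT_prepend epsT_linear assms epsw_def algebra_simps)
qed (simp_all add: epsT_linear assms epsw_def algebra_simps)

lemma epsT_diamond:
  assumes "\<And>a b. eps (a * b) = eps a * eps b" "eps 1 = 1"
    and "is_sh x" "is_sh y"
  shows "epsT eps (diamond x y) = epsT eps x * epsT eps y"
  using assms(3,4)
  by (induction x y rule: sh_bilin_induct)
    (simp_all add: diamond_linear epsT_linear diamond_pt epsT_dw[OF assms(1,2)] algebra_simps)


section \<open>The tensor square of the shuffle algebra\<close>

definition sh2_keys :: "'a list list set" where
  "sh2_keys = {[u, v] | u v. u \<noteq> [] \<and> v \<noteq> []}"

lemma is_sh2_iff: "is_sh2 p \<longleftrightarrow> Poly_Mapping.keys p \<subseteq> sh2_keys"
  by (auto simp: is_sh2_def sh2_keys_def)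

lemma sh2_induct [consumes 1, case_names zero sing add]:
  assumes "is_sh2 p" "P 0" "\<And>u v c. u \<noteq> [] \<Longrightarrow> v \<noteq> [] \<Longrightarrow> P (smul c (pt [u, v]))"
    and "\<And>a b. P a \<Longrightarrow> P b \<Longrightarrow> P (a + b)"
  shows "P p"
  using assms(1)[unfolded is_sh2_iff]
  by (induction p rule: lin_induct) (use assms(2-) in \<open>auto simp: sh2_keys_def\<close>)

lemma sh2_bilin_induct [consumes 2, case_names zero1 zero2 sing add1 add2]:
  assumes "is_sh2 p" "is_sh2 q"
    and "\<And>q. P 0 q" and "\<And>p. P p 0"
    and "\<And>u1 u2 v1 v2 c d. u1 \<noteq> [] \<Longrightarrow> u2 \<noteq> [] \<Longrightarrow> v1 \<noteq> [] \<Longrightarrow> v2 \<noteq> [] \<Longrightarrow>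
      P (smul c (pt [u1, u2])) (smul d (pt [v1, v2]))"
    and "\<And>a b q. P a q \<Longrightarrow> P b q \<Longrightarrow> P (a + b) q"
    and "\<And>a b p. P p a \<Longrightarrow> P p b \<Longrightarrow> P p (a + b)"
  shows "P p q"
  using assms(1,2)[unfolded is_sh2_iff]
  by (induction p q rule: bilin_induct) (use assms(3-) in \<open>auto simp: sh2_keys_def\<close>)

lemma is_sh2_0: "is_sh2 0"
  and is_sh2_add: "is_sh2 p \<Longrightarrow> is_sh2 q \<Longrightarrow> is_sh2 (p + q)"
  and is_sh2_smul: "is_sh2 p \<Longrightarrow> is_sh2 (smul c p)"
  using keys_add[of p q] keys_smul_subset[of c p] by (auto simp: is_sh2_iff)

lemma is_sh2_pt: "u \<noteq> [] \<Longrightarrow> v \<noteq> [] \<Longrightarrow> is_sh2 (pt [u, v])"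
  by (simp add: is_sh2_def)

lemma is_sh2_tens: "is_sh p \<Longrightarrow> is_sh q \<Longrightarrow> is_sh2 (tens p q)"
proof (induction p q rule: sh_bilin_induct)
  case (sing u v c d)
  then show ?case by (simp add: tens_linear is_sh2_smul is_sh2_pt)
qed (simp_all add: tens_linear is_sh2_0 is_sh2_add)

lemma is_sh2_bullet: "is_sh2 (bullet p q :: 'a::comm_ring_1 list list \<Rightarrow>\<^sub>0 'k::comm_ring_1)"
proof -
  have "Poly_Mapping.keys (tens (dw u u') (dw v v') :: _ \<Rightarrow>\<^sub>0 'k) \<subseteq> sh2_keys" for u u' v v' :: "'a list"
    using is_sh2_tens[OF is_sh_dw is_sh_dw] by (simp add: is_sh2_iff)
  then show ?thesis
    unfolding bullet_on2 is_sh2_iff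
    using keys_bilin_ext_subset[of "\<lambda>I J. on2 (\<lambda>u v. on2 (\<lambda>u' v'. tens (dw u u') (dw v v')) J) I" p q]
    by (fastforce simp: on2_def split: list.splits)
qed

lemma is_sh2_id_Pr: "is_sh2 p \<Longrightarrow> is_sh2 (id_Pr p)"
  by (induction p rule: sh2_induct) (simp_all add: id_Pr_linear is_sh2_add is_sh2_smul is_sh2_0 is_sh2_pt)

lemma bullet_tens:
  fixes X1 :: "'a::comm_ring_1 list list \<Rightarrow>\<^sub>0 'k::comm_ring_1"
  assumes "is_sh X1" "is_sh X2" "is_sh Y1" "is_sh Y2"
  shows "bullet (tens X1 X2) (tens Y1 Y2) = tens (diamond X1 Y1) (diamond X2 Y2)"
proof -
  have "\<forall>X2 Y2. is_sh X2 \<longrightarrow> is_sh Y2 \<longrightarrow> bullet (tens X1 X2) (tens Y1 Y2) = tens (diamond X1 Y1) (diamond X2 Y2)"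
    using assms(1,3)
  proof (induction X1 Y1 rule: sh_bilin_induct)
    case (sing u1 v1 c d)
    show ?case
    proof (intro allI impI)
      fix X2 Y2 :: "'a list list \<Rightarrow>\<^sub>0 'k"
      assume "is_sh X2" "is_sh Y2"
      then show "bullet (tens (smul c (pt [u1])) X2) (tens (smul d (pt [v1])) Y2)
          = tens (diamond (smul c (pt [u1])) (smul d (pt [v1]))) (diamond X2 Y2)"
        by (induction X2 Y2 rule: sh_bilin_induct)
          (simp_all add: tens_linear bullet_linear diamond_linear diamond_pt smul_add_right mult_ac)
    qed
  qed (simp_all add: tens_linear bullet_linear diamond_linear)
  then show ?thesis using assms(2,4) by blast
qed

lemma bullet_commute: "is_sh2 p \<Longrightarrow> is_sh2 q \<Longrightarrow> bullet p q = bullet q p"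
  by (induction p q rule: sh2_bilin_induct) (simp_all add: bullet_linear dw_commute mult.commute)

lemma bullet_assoc:
  fixes p :: "'a::comm_ring_1 list list \<Rightarrow>\<^sub>0 'k::comm_ring_1"
  assumes "is_sh2 p" "is_sh2 q" "is_sh2 r"
  shows "bullet (bullet p q) r = bullet p (bullet q r)"
proof -
  have words: "bullet (bullet (pt [u1, u2]) (pt [v1, v2])) (pt [w1, w2])
      = bullet (pt [u1, u2] :: _ \<Rightarrow>\<^sub>0 'k) (bullet (pt [v1, v2]) (pt [w1, w2]))"
    if "u1 \<noteq> []" "u2 \<noteq> []" "v1 \<noteq> []" "v2 \<noteq> []" "w1 \<noteq> []" "w2 \<noteq> []" for u1 u2 v1 v2 w1 w2
  proof -
    have sh: "is_sh (pt [x] :: _ \<Rightarrow>\<^sub>0 'k)" if "x \<in> {u1, u2, v1, v2, w1, w2}" for x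
      using that \<open>u1 \<noteq> []\<close> \<open>u2 \<noteq> []\<close> \<open>v1 \<noteq> []\<close> \<open>v2 \<noteq> []\<close> \<open>w1 \<noteq> []\<close> \<open>w2 \<noteq> []\<close>
      by (auto intro: is_sh_pt)
    show ?thesis
      unfolding tens_pt_pt[symmetric]
      by (simp only: bullet_tens sh is_sh_diamond diamond_assoc insert_iff simp_thms)
  qed
  have "\<forall>r. is_sh2 r \<longrightarrow> bullet (bullet p q) r = bullet p (bullet q r)"
    using assms(1,2)
  proof (induction p q rule: sh2_bilin_induct)
    case (sing u1 u2 v1 v2 c d)
    show ?case
    proof (intro allI impI)
      fix r :: "'a list list \<Rightarrow>\<^sub>0 'k"
      assume "is_sh2 r"
      then show "bullet (bullet (smul c (pt [u1, u2])) (smul d (pt [v1, v2]))) r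
          = bullet (smul c (pt [u1, u2])) (bullet (smul d (pt [v1, v2])) r)"
        by (induction r rule: sh2_induct) (simp_all add: bullet_linear words sing mult_ac del: bullet_pt)
    qed
  qed (simp_all add: bullet_linear)
  then show ?thesis using assms(3) by blast
qed

lemma bullet_unit: "is_sh2 q \<Longrightarrow> bullet (pt [[1], [1]]) q = q"
  by (induction q rule: sh2_induct) (simp_all add: bullet_linear tens_linear dw_single_left)

lemma bullet_bullet_swap:
  assumes "is_sh2 A" "is_sh2 B" "is_sh2 C" "is_sh2 E"
  shows "bullet (bullet A B) (bullet C E) = bullet (bullet A C) (bullet B E)"
  using assms by (metis bullet_assoc bullet_commute is_sh2_bullet)

lemma id_Pr_tens: "is_sh X \<Longrightarrow> is_sh Y \<Longrightarrow> id_Pr (tens X Y) = tens X (Pr Y)"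
  by (induction X Y rule: sh_bilin_induct) (simp_all add: id_Pr_linear tens_linear Pr_linear)

lemma bullet_id_Pr_id_Pr_tens:
  assumes "is_sh U1" "is_sh U2" "is_sh V1" "is_sh V2"
  shows "bullet (id_Pr (tens U1 U2)) (id_Pr (tens V1 V2))
    = id_Pr (bullet (tens U1 U2) (id_Pr (tens V1 V2)) + bullet (id_Pr (tens U1 U2)) (tens V1 V2)
        - id_Pr (bullet (tens U1 U2) (tens V1 V2)))"
  using assms
  by (simp add: id_Pr_tens bullet_tens is_sh_Pr is_sh_diamond diamond_Pr_Pr nij_sum_def
      id_Pr_linear Pr_linear tens_linear is_sh_intros)

lemma bullet_id_Pr_id_Pr:
  fixes X :: "'a::comm_ring_1 list list \<Rightarrow>\<^sub>0 'k::comm_ring_1"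
  assumes "is_sh2 X" "is_sh2 Y"
  shows "bullet (id_Pr X) (id_Pr Y) = id_Pr (bullet X (id_Pr Y) + bullet (id_Pr X) Y - id_Pr (bullet X Y))"
  using assms
proof (induction X Y rule: sh2_bilin_induct)
  case (sing u1 u2 v1 v2 c d)
  then have "bullet (id_Pr (pt [u1, u2] :: _ \<Rightarrow>\<^sub>0 'k)) (id_Pr (pt [v1, v2]))
      = id_Pr (bullet (pt [u1, u2]) (id_Pr (pt [v1, v2])) + bullet (id_Pr (pt [u1, u2])) (pt [v1, v2])
          - id_Pr (bullet (pt [u1, u2]) (pt [v1, v2])))"
    unfolding tens_pt_pt[symmetric] by (intro bullet_id_Pr_id_Pr_tens is_sh_pt)
  then show ?case
    by (simp add: bullet_linear id_Pr_linear mult_ac smul_add_right smul_diff_right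
        del: bullet_pt id_Pr_pt)
next
  case (add1 a b q)
  then show ?case by (simp add: bullet_linear id_Pr_linear algebra_simps)
next
  case (add2 a b p)
  then show ?case by (simp add: bullet_linear id_Pr_linear algebra_simps)
qed (simp_all add: bullet_linear id_Pr_linear)

lemma bullet_id_Pr_interchange:
  assumes "is_sh2 A" "is_sh2 B" "is_sh2 X" "is_sh2 Y"
  shows "bullet (bullet A B) (id_Pr (bullet X (id_Pr Y) + bullet (id_Pr X) Y - id_Pr (bullet X Y)))
    = bullet (bullet A (id_Pr X)) (bullet B (id_Pr Y))"
  using assms by (simp add: bullet_id_Pr_id_Pr[symmetric] bullet_bullet_swap is_sh2_id_Pr)


definition letter_pairs :: "'a list list set" where
  "letter_pairs = {[[x], [y]] | x y. True}"

definition letter_word_pairs :: "'a list list set" where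
  "letter_word_pairs = {[[z], v] | z v. v \<noteq> []}"

definition wcat :: "('a, 'k::comm_ring_1) tensor \<Rightarrow> ('a, 'k) tensor \<Rightarrow> ('a, 'k) tensor" where
  "wcat p q = bilin_ext (\<lambda>I J. on1 (\<lambda>u. on1 (\<lambda>v. pt [u @ v]) J) I) p q"

lemma wcat_pt [simp]: "wcat (pt [u]) (pt [v]) = pt [u @ v]"
  by (simp add: wcat_def)

lemma wcat_linear:
  "wcat (p + p') q = wcat p q + wcat p' q" "wcat p (q + q') = wcat p q + wcat p q'"
  "wcat (smul c p) q = smul c (wcat p q)" "wcat p (smul c q) = smul c (wcat p q)"
  "wcat 0 q = 0" "wcat p 0 = 0"
  by (simp_all add: wcat_def bilin_ext_linear)

lemma teq_wcat:
  assumes "teq sc p p'" "teq sc q q'"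
  shows "teq sc (wcat p q) (wcat p' q')"
  unfolding wcat_def
proof (rule teq_bilin_ext[OF _ _ assms])
  fix J
  show "multilinear sc (\<lambda>I. on1 (\<lambda>u. on1 (\<lambda>v. pt [u @ v]) J) I)"
    by (intro multilinear_on1 multilinear_word_on1_param)
      (use multilinear_word_pt[of sc "[]" "[]" _ "[]"] in simp)
next
  fix I
  show "multilinear sc (\<lambda>J. on1 (\<lambda>u. on1 (\<lambda>v. pt [u @ v]) J) I)"
    by (intro multilinear_on1_param multilinear_on1)
      (use multilinear_word_pt[of sc "[]" _ "[]" "[]"] in simp)
qed

text \<open>
  The product of \<open>A \<otimes> A \<otimes> Sha(A)\<close> which multiplies the first two factors and
  concatenates the third; both \<open>Delta_T \<otimes> id\<close> and \<open>id \<otimes> Delta_T\<close> turn the recursion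
  for \<open>Delta_T\<close> into this product.
\<close>

definition bullet_cat ::
    "('a::comm_ring_1, 'k::comm_ring_1) tensor \<Rightarrow> ('a, 'k) tensor \<Rightarrow> ('a, 'k) tensor" where
  "bullet_cat p q = bilin_ext
    (\<lambda>I J. on3 (\<lambda>A B C. on3 (\<lambda>A' B' C'. tens (tens (dw A A') (dw B B')) (pt [C @ C'])) J) I) p q"

lemma bullet_cat_pt [simp]:
  "bullet_cat (pt [A, B, C]) (pt [A', B', C']) = tens (tens (dw A A') (dw B B')) (pt [C @ C'])"
  by (simp add: bullet_cat_def)

lemma bullet_cat_linear:
  "bullet_cat (p + p') q = bullet_cat p q + bullet_cat p' q"
  "bullet_cat p (q + q') = bullet_cat p q + bullet_cat p q'"
  "bullet_cat (smul c p) q = smul c (bullet_cat p q)" "bullet_cat p (smul c q) = smul c (bullet_cat p q)"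
  "bullet_cat 0 q = 0" "bullet_cat p 0 = 0"
  by (simp_all add: bullet_cat_def bilin_ext_linear)

lemma teq_bullet_cat:
  fixes sc :: "'k::comm_ring_1 \<Rightarrow> 'a::comm_ring_1 \<Rightarrow> 'a"
  assumes "k_algebra sc" "teq sc p p'" "teq sc q q'"
  shows "teq sc (bullet_cat p q) (bullet_cat p' q')"
proof -
  have cat: "multilinear_word sc (\<lambda>w. pt [w @ v])" "multilinear_word sc (\<lambda>w. pt [u @ w])" for u v :: "'a list"
    using multilinear_word_pt[of sc "[]" "[]" v "[]"] multilinear_word_pt[of sc "[]" u "[]" "[]"] by simp_all
  show ?thesis
    unfolding bullet_cat_def
    by (rule teq_bilin_ext[OF _ _ assms(2,3)];
        intro multilinear_on3 multilinear_word_on3_param multilinear_on3_param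
          multilinear_word_tens_left multilinear_word_tens_right multilinear_word_dw_left
          multilinear_word_dw_right assms(1) cat)
qed

lemma bullet_cat_tens_left:
  assumes "is_sh2 P" "is_sh2 Q"
  shows "bullet_cat (tens P (pt [C])) (tens Q (pt [C'])) = tens (bullet P Q) (pt [C @ C'])"
  using assms
  by (induction P Q rule: sh2_bilin_induct) (simp_all add: tens_linear bullet_cat_linear bullet_linear)

lemma bullet_cat_tens_right:
  assumes "Poly_Mapping.keys P \<subseteq> letter_pairs" "Poly_Mapping.keys Q \<subseteq> letter_word_pairs"
  shows "bullet_cat (tens (pt [[x]]) P) (tens (pt [[z]]) Q) = tens (pt [[x * z]]) (bullet P (id_Pr Q))"
  using assms
proof (induction P Q rule: bilin_induct)
  case (sing p q c d)
  then show ?case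
    by (auto simp: letter_pairs_def letter_word_pairs_def tens_linear bullet_cat_linear bullet_linear
        id_Pr_linear dw_simps)
qed (simp_all add: tens_linear bullet_cat_linear bullet_linear id_Pr_linear)

lemma keys_bullet_id_Pr_subset:
  assumes "Poly_Mapping.keys p \<subseteq> letter_pairs" "Poly_Mapping.keys q \<subseteq> letter_word_pairs"
  shows "Poly_Mapping.keys (bullet p (id_Pr q)) \<subseteq> letter_word_pairs"
  using assms
proof (induction p q rule: bilin_induct)
  case (sing p q c d)
  then show ?case
    by (auto simp: letter_pairs_def letter_word_pairs_def bullet_linear id_Pr_linear dw_simps
        dest!: keys_smul_subset[THEN subsetD])
next
  case (add1 a b q)
  then show ?case
    using keys_add[of "bullet a (id_Pr q)" "bullet b (id_Pr q)"] by (auto simp: bullet_linear id_Pr_linear)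
next
  case (add2 a b p)
  then show ?case
    using keys_add[of "bullet p (id_Pr a)" "bullet p (id_Pr b)"] by (auto simp: bullet_linear id_Pr_linear)
qed (simp_all add: bullet_linear id_Pr_linear)


section \<open>The coproduct\<close>

locale left_counital_bialgebra =
  fixes sc :: "'k::comm_ring_1 \<Rightarrow> 'a::comm_ring_1 \<Rightarrow> 'a"
    and Delta :: "'a \<Rightarrow> ('a list list \<Rightarrow>\<^sub>0 'k)"
    and eps :: "'a \<Rightarrow> 'k"
  assumes lc_bialgebra: "lc_bialgebra sc Delta eps"
begin

lemma k_algebra: "k_algebra sc"
  and keys_Delta: "Poly_Mapping.keys (Delta a) \<subseteq> {[[x], [y]] | x y. True}"
  and Delta_add: "teq sc (Delta (a + b)) (Delta a + Delta b)"
  and Delta_smul: "teq sc (Delta (sc c a)) (smul c (Delta a))"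
  and Delta_mult: "teq sc (Delta (a * b)) (bullet (Delta a) (Delta b))"
  and Delta_1: "teq sc (Delta 1) (pt [[1], [1]])"
  and Delta_coassoc: "teq sc (tmap_left (lift1 Delta) (Delta a)) (tmap_right (lift1 Delta) (Delta a))"
  and eps_add: "eps (a + b) = eps a + eps b"
  and eps_smul: "eps (sc c a) = c * eps a"
  and eps_mult: "eps (a * b) = eps a * eps b"
  and eps_1: "eps 1 = 1"
  and Delta_counit: "teq sc (counit_left (epsw eps) (Delta a)) (pt [[a]])"
  using lc_bialgebra by (simp_all add: lc_bialgebra_def)

lemma is_sh2_Delta: "is_sh2 (Delta a)"
  using keys_Delta[of a] by (auto simp: is_sh2_def)

lemma DTw_Cons: "w \<noteq> [] \<Longrightarrow> DTw Delta (a # w) = bullet (Delta a) (id_Pr (DTw Delta w))"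
  by (cases w) auto

lemma is_sh2_DTw: "is_sh2 (DTw Delta w)"
  by (cases w; cases "tl w") (simp_all add: is_sh2_0 is_sh2_Delta is_sh2_bullet)

lemma is_sh2_DeltaT: "is_sh x \<Longrightarrow> is_sh2 (DeltaT Delta x)"
  by (induction x rule: sh_induct)
    (simp_all add: DeltaT_linear is_sh2_0 is_sh2_add is_sh2_smul is_sh2_DTw)

lemma linear_in_letter_DTw: "linear_in_letter sc (\<lambda>t. DTw Delta (u1 @ [t] @ u2))"
proof (induction u1)
  case Nil
  have Delta: "linear_in_letter sc Delta"
    unfolding linear_in_letter_def using Delta_add Delta_smul by blast
  have "linear_in_letter sc (\<lambda>t. bullet (Delta t) (id_Pr (DTw Delta u2)))"
    using Delta by (rule linear_in_letter_teq_map[rotated 3])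
      (auto intro: teq_bullet[OF k_algebra] simp: bullet_linear)
  then show ?case
    using Delta by (cases "u2 = []") (simp_all add: DTw_Cons)
next
  case (Cons z u1)
  have "linear_in_letter sc (\<lambda>t. bullet (Delta z) (id_Pr (DTw Delta (u1 @ [t] @ u2))))"
    using Cons by (rule linear_in_letter_teq_map[rotated 3])
      (auto intro: teq_bullet[OF k_algebra] teq_id_Pr simp: bullet_linear id_Pr_linear)
  then show ?case by (simp add: DTw_Cons)
qed

lemma teq_DeltaT: "teq sc p q \<Longrightarrow> teq sc (DeltaT Delta p) (DeltaT Delta q)"
  unfolding DeltaT_on1
  by (rule teq_lin_ext[OF multilinear_on1])
    (simp add: multilinear_word_iff linear_in_letter_DTw[simplified])

lemma DeltaT_prepend:
  "is_sh X \<Longrightarrow> DeltaT Delta (prepend c X) = bullet (Delta c) (id_Pr (DeltaT Delta X))"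
  by (induction X rule: sh_induct)
    (simp_all add: DeltaT_linear prepend_linear bullet_linear id_Pr_linear DTw_Cons)

lemma bullet_Delta_1: "is_sh2 q \<Longrightarrow> teq sc (bullet (Delta 1) q) q"
  using teq_bullet[OF k_algebra Delta_1 teq_refl, of q] by (simp add: bullet_unit)

lemma DeltaT_Pr: "is_sh X \<Longrightarrow> teq sc (DeltaT Delta (Pr X)) (id_Pr (DeltaT Delta X))"
  unfolding Pr_def by (simp add: DeltaT_prepend bullet_Delta_1 is_sh2_id_Pr is_sh2_DeltaT)

lemma DTw_1_Cons: "w \<noteq> [] \<Longrightarrow> teq sc (DTw Delta (1 # w)) (id_Pr (DTw Delta w))"
  by (simp add: DTw_Cons bullet_Delta_1 is_sh2_id_Pr is_sh2_DTw)

lemma DeltaT_dw_letter: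
  "v \<noteq> [] \<Longrightarrow> teq sc (DeltaT Delta (dw [a] (b # v))) (bullet (DTw Delta [a]) (DTw Delta (b # v)))"
proof -
  assume "v \<noteq> []"
  then have "DeltaT Delta (dw [a] (b # v)) = bullet (Delta (a * b)) (id_Pr (DTw Delta v))"
    by (simp add: dw_simps DTw_Cons)
  also have "teq sc \<dots> (bullet (bullet (Delta a) (Delta b)) (id_Pr (DTw Delta v)))"
    by (rule teq_bullet[OF k_algebra Delta_mult teq_refl])
  also have "\<dots> = bullet (DTw Delta [a]) (DTw Delta (b # v))"
    using \<open>v \<noteq> []\<close> by (simp add: bullet_assoc is_sh2_Delta is_sh2_id_Pr is_sh2_DTw DTw_Cons)
  finally show ?thesis .
qed

lemma DeltaT_dw:
  "u \<noteq> [] \<Longrightarrow> v \<noteq> [] \<Longrightarrow> teq sc (DeltaT Delta (dw u v)) (bullet (DTw Delta u) (DTw Delta v))"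
proof (induction "length u + length v" arbitrary: u v rule: less_induct)
  case less
  obtain a u' where u: "u = a # u'" using less.prems(1) by (cases u) auto
  obtain b v' where v: "v = b # v'" using less.prems(2) by (cases v) auto
  consider "u' = []" "v' = []" | "u' = []" "v' \<noteq> []" | "u' \<noteq> []" "v' = []" | "u' \<noteq> []" "v' \<noteq> []"
    by blast
  then show ?case
  proof cases
    case 1
    then show ?thesis using Delta_mult by (simp add: u v dw_simps)
  next
    case 2
    then show ?thesis using DeltaT_dw_letter by (simp add: u v)
  next
    case 3
    then show ?thesis
      using DeltaT_dw_letter[of u' b a] bullet_commute[OF is_sh2_Delta[of b] is_sh2_DTw[of "a # u'"]]
      by (simp add: u v dw_commute)
  next
    case 4
    define X where "X = DTw Delta u'"
    define Y where "Y = DTw Delta v'"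
    have sh2: "is_sh2 X" "is_sh2 Y" by (simp_all add: X_def Y_def is_sh2_DTw)
    have "teq sc (DeltaT Delta (dw u' (1 # v'))) (bullet X (id_Pr Y))"
      using less.hyps[of u' "1 # v'"] 4 u v
      by (auto simp: X_def Y_def intro: teq_trans teq_bullet[OF k_algebra teq_refl DTw_1_Cons])
    moreover have "teq sc (DeltaT Delta (dw (1 # u') v')) (bullet (id_Pr X) Y)"
      using less.hyps[of "1 # u'" v'] 4 u v
      by (auto simp: X_def Y_def intro: teq_trans teq_bullet[OF k_algebra DTw_1_Cons teq_refl])
    moreover have "teq sc (DeltaT Delta (prepend 1 (dw u' v'))) (id_Pr (bullet X Y))"
      using DeltaT_Pr[OF is_sh_dw, of u' v', unfolded Pr_def] teq_id_Pr[OF less.hyps[of u' v']] 4 u v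
      by (auto simp: X_def Y_def intro: teq_trans)
    ultimately have rec: "teq sc (DeltaT Delta (dw u' (1 # v') + dw (1 # u') v' - prepend 1 (dw u' v')))
        (bullet X (id_Pr Y) + bullet (id_Pr X) Y - id_Pr (bullet X Y))"
      unfolding DeltaT_linear by (intro teq_add teq_diff)
    have "DeltaT Delta (dw u v)
        = bullet (Delta (a * b)) (id_Pr (DeltaT Delta (dw u' (1 # v') + dw (1 # u') v' - prepend 1 (dw u' v'))))"
      using 4 by (simp add: u v dw_simps DeltaT_prepend is_sh_intros)
    also have "teq sc \<dots> (bullet (bullet (Delta a) (Delta b))
        (id_Pr (bullet X (id_Pr Y) + bullet (id_Pr X) Y - id_Pr (bullet X Y))))"
      by (rule teq_bullet[OF k_algebra Delta_mult teq_id_Pr[OF rec]])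
    also have "\<dots> = bullet (bullet (Delta a) (id_Pr X)) (bullet (Delta b) (id_Pr Y))"
      using sh2 by (simp add: bullet_id_Pr_interchange is_sh2_Delta)
    also have "\<dots> = bullet (DTw Delta u) (DTw Delta v)"
      using 4 by (simp add: u v X_def Y_def DTw_Cons)
    finally show ?thesis .
  qed
qed

lemma DeltaT_diamond:
  "is_sh x \<Longrightarrow> is_sh y \<Longrightarrow>
    teq sc (DeltaT Delta (diamond x y)) (bullet (DeltaT Delta x) (DeltaT Delta y))"
proof (induction x y rule: sh_bilin_induct)
  case (sing u v c d)
  then show ?case
    by (simp add: diamond_linear DeltaT_linear bullet_linear diamond_pt) (intro teq_smul DeltaT_dw)
next
  case (add1 a b q)
  then show ?case by (simp add: diamond_linear DeltaT_linear bullet_linear teq_add)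
next
  case (add2 a b p)
  then show ?case by (simp add: diamond_linear DeltaT_linear bullet_linear teq_add)
qed (simp_all add: diamond_linear DeltaT_linear bullet_linear)

lemma keys_Delta_subset: "Poly_Mapping.keys (Delta a) \<subseteq> letter_pairs"
  using keys_Delta[of a] by (simp add: letter_pairs_def)

lemma keys_DTw_subset: "w \<noteq> [] \<Longrightarrow> Poly_Mapping.keys (DTw Delta w) \<subseteq> letter_word_pairs"
proof (induction w)
  case (Cons a w)
  then show ?case
    using keys_Delta[of a] keys_bullet_id_Pr_subset[OF keys_Delta_subset]
    by (cases "w = []") (auto simp: letter_word_pairs_def DTw_Cons)
qed simp

lemma counit_left_bullet_id_Pr:
  assumes "Poly_Mapping.keys p \<subseteq> letter_pairs" "Poly_Mapping.keys q \<subseteq> letter_word_pairs"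
  shows "counit_left (epsw eps) (bullet p (id_Pr q))
    = wcat (counit_left (epsw eps) p) (counit_left (epsw eps) q)"
  using assms
proof (induction p q rule: bilin_induct)
  case (sing p q c d)
  then show ?case
    by (auto simp: letter_pairs_def letter_word_pairs_def bullet_linear id_Pr_linear dw_simps
        counit_left_linear wcat_linear epsw_def eps_mult mult_ac)
qed (simp_all add: bullet_linear id_Pr_linear counit_left_linear wcat_linear)

lemma counit_left_DTw: "w \<noteq> [] \<Longrightarrow> teq sc (counit_left (epsw eps) (DTw Delta w)) (pt [w])"
proof (induction w)
  case (Cons a w)
  show ?case
  proof (cases "w = []")
    case True
    then show ?thesis using Delta_counit by simp
  next
    case False
    then have "counit_left (epsw eps) (DTw Delta (a # w))
        = wcat (counit_left (epsw eps) (Delta a)) (counit_left (epsw eps) (DTw Delta w))"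
      by (simp add: DTw_Cons counit_left_bullet_id_Pr keys_Delta_subset keys_DTw_subset)
    also have "teq sc \<dots> (wcat (pt [[a]]) (pt [w]))"
      using Cons False by (intro teq_wcat Delta_counit) auto
    finally show ?thesis by simp
  qed
qed simp

lemma counit_left_DeltaT: "is_sh x \<Longrightarrow> teq sc (counit_left (epsw eps) (DeltaT Delta x)) x"
  by (induction x rule: sh_induct)
    (auto simp: counit_left_linear DeltaT_linear counit_left_DTw intro: teq_add teq_smul)

lemma tmap_left_DTw_bullet:
  assumes "Poly_Mapping.keys p \<subseteq> letter_pairs" "Poly_Mapping.keys q \<subseteq> letter_word_pairs"
  shows "teq sc (tmap_left (DTw Delta) (bullet p (id_Pr q)))
    (bullet_cat (tmap_left (lift1 Delta) p) (tmap_left (DTw Delta) q))"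
  using assms
proof (induction p q rule: bilin_induct)
  case (sing p q c d)
  then obtain x y z v where pq: "p = [[x], [y]]" "q = [[z], v]" "v \<noteq> []"
    by (auto simp: letter_pairs_def letter_word_pairs_def)
  have "tmap_left (DTw Delta) (bullet (pt p) (id_Pr (pt q))) = tens (Delta (x * z)) (pt [y # v])"
    using pq by (simp add: dw_simps)
  also have "teq sc \<dots> (tens (bullet (Delta x) (Delta z)) (pt [[y] @ v]))"
    by (simp add: teq_tens Delta_mult)
  also have "\<dots> = bullet_cat (tmap_left (lift1 Delta) (pt p)) (tmap_left (DTw Delta) (pt q))"
    using pq by (simp add: lift1_def bullet_cat_tens_left is_sh2_Delta del: tens_pt)
  finally show ?case
    by (simp add: bullet_linear id_Pr_linear tmap_left_linear bullet_cat_linear) (intro teq_smul)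
next
  case (add1 a b q)
  then show ?case by (simp add: bullet_linear id_Pr_linear tmap_left_linear bullet_cat_linear teq_add)
next
  case (add2 a b p)
  then show ?case by (simp add: bullet_linear id_Pr_linear tmap_left_linear bullet_cat_linear teq_add)
qed (simp_all add: bullet_linear id_Pr_linear tmap_left_linear bullet_cat_linear)

lemma tmap_right_DTw_bullet:
  assumes "Poly_Mapping.keys p \<subseteq> letter_pairs" "Poly_Mapping.keys q \<subseteq> letter_word_pairs"
  shows "tmap_right (DTw Delta) (bullet p (id_Pr q))
    = bullet_cat (tmap_right (lift1 Delta) p) (tmap_right (DTw Delta) q)"
  using assms
proof (induction p q rule: bilin_induct)
  case (sing p q c d)
  then obtain x y z v where pq: "p = [[x], [y]]" "q = [[z], v]" "v \<noteq> []"
    by (auto simp: letter_pairs_def letter_word_pairs_def)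
  then have "tmap_right (DTw Delta) (bullet (pt p) (id_Pr (pt q)))
      = bullet_cat (tmap_right (lift1 Delta) (pt p)) (tmap_right (DTw Delta) (pt q))"
    by (simp add: dw_simps lift1_def bullet_cat_tens_right keys_Delta_subset keys_DTw_subset DTw_Cons
        tens_pt_pt del: tens_pt)
  then show ?case
    by (simp add: bullet_linear id_Pr_linear tmap_right_linear bullet_cat_linear)
qed (simp_all add: bullet_linear id_Pr_linear tmap_right_linear bullet_cat_linear)

lemma tmap_left_lift1_Delta: "tmap_left (DTw Delta) (Delta a) = tmap_left (lift1 Delta) (Delta a)"
  unfolding tmap_left_on2 using keys_Delta[of a] by (intro lin_ext_cong) (auto simp: lift1_def)

lemma tmap_right_lift1_Delta: "tmap_right (DTw Delta) (Delta a) = tmap_right (lift1 Delta) (Delta a)"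
  unfolding tmap_right_on2 using keys_Delta[of a] by (intro lin_ext_cong) (auto simp: lift1_def)

lemma coassoc_DTw:
  "w \<noteq> [] \<Longrightarrow> teq sc (tmap_left (DTw Delta) (DTw Delta w)) (tmap_right (DTw Delta) (DTw Delta w))"
proof (induction w)
  case (Cons a w)
  show ?case
  proof (cases "w = []")
    case True
    then show ?thesis using Delta_coassoc by (simp add: tmap_left_lift1_Delta tmap_right_lift1_Delta)
  next
    case False
    have "tmap_left (DTw Delta) (DTw Delta (a # w))
        = tmap_left (DTw Delta) (bullet (Delta a) (id_Pr (DTw Delta w)))"
      using False by (simp add: DTw_Cons)
    also have "teq sc \<dots> (bullet_cat (tmap_left (lift1 Delta) (Delta a)) (tmap_left (DTw Delta) (DTw Delta w)))"
      using False by (intro tmap_left_DTw_bullet keys_Delta_subset keys_DTw_subset)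
    also have "teq sc \<dots> (bullet_cat (tmap_right (lift1 Delta) (Delta a)) (tmap_right (DTw Delta) (DTw Delta w)))"
      using Cons False by (intro teq_bullet_cat k_algebra Delta_coassoc) auto
    also have "\<dots> = tmap_right (DTw Delta) (DTw Delta (a # w))"
      using False by (simp add: DTw_Cons tmap_right_DTw_bullet keys_Delta_subset keys_DTw_subset)
    finally show ?thesis .
  qed
qed simp

lemma coassoc_DeltaT:
  "is_sh x \<Longrightarrow> teq sc (tmap_left (DTw Delta) (DeltaT Delta x)) (tmap_right (DTw Delta) (DeltaT Delta x))"
  by (induction x rule: sh_induct)
    (auto simp: tmap_left_linear tmap_right_linear DeltaT_linear coassoc_DTw intro: teq_add teq_smul)

lemma nullT_DeltaT: "nullT sc x \<Longrightarrow> nullT sc (DeltaT Delta x)"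
  using teq_DeltaT[of x 0] by (simp add: nullT_iff_teq_0 DeltaT_linear)

lemma epsT_nullT_bialgebra: "nullT sc x \<Longrightarrow> epsT eps x = 0"
  by (rule epsT_nullT[OF eps_add eps_smul])

lemma DeltaT_muT_1: "teq sc (DeltaT Delta (muT 1)) (pt [[1], [1]])"
  using Delta_1 by (simp add: muT_def)

lemma epsT_muT_1: "epsT eps (muT 1) = 1"
  by (simp add: muT_def epsT_linear epsw_def eps_1)

lemma epsT_diamond_bialgebra: "is_sh x \<Longrightarrow> is_sh y \<Longrightarrow> epsT eps (diamond x y) = epsT eps x * epsT eps y"
  by (rule epsT_diamond[OF eps_mult eps_1])

end

theorem theorem3p8:
  fixes sc :: "'k::comm_ring_1 \<Rightarrow> 'a::comm_ring_1 \<Rightarrow> 'a"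
    and Delta :: "'a \<Rightarrow> ('a list list \<Rightarrow>\<^sub>0 'k)"
    and eps :: "'a \<Rightarrow> 'k"
  assumes bialg: "lc_bialgebra sc Delta eps"
  shows
    "(\<forall>x y. is_sh x \<and> is_sh y \<and> nullT sc x \<longrightarrow> nullT sc (diamond x y) \<and> nullT sc (diamond y x))
   \<and> (\<forall>x. is_sh x \<and> nullT sc x \<longrightarrow> nullT sc (Pr x) \<and> nullT sc (DeltaT Delta x) \<and> epsT eps x = 0)
   \<and> (\<forall>(x :: 'a list list \<Rightarrow>\<^sub>0 'k) y. is_sh x \<and> is_sh y \<longrightarrow> is_sh (diamond x y))
   \<and> (\<forall>c. is_sh (muT c :: 'a list list \<Rightarrow>\<^sub>0 'k))
   \<and> (\<forall>x. is_sh x \<longrightarrow> is_sh (Pr x) \<and> is_sh2 (DeltaT Delta x))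
   \<and> (\<forall>x y z. is_sh x \<and> is_sh y \<and> is_sh z \<longrightarrow>
        teq sc (diamond (diamond x y) z) (diamond x (diamond y z)))
   \<and> (\<forall>x y. is_sh x \<and> is_sh y \<longrightarrow> teq sc (diamond x y) (diamond y x))
   \<and> (\<forall>c x. is_sh x \<longrightarrow> teq sc (diamond (muT c) x) (smul c x))
   \<and> (\<forall>x y. is_sh x \<and> is_sh y \<longrightarrow>
        teq sc (diamond (Pr x) (Pr y))
               (Pr (diamond (Pr x) y) + Pr (diamond x (Pr y)) - Pr (Pr (diamond x y))))
   \<and> (\<forall>x y. is_sh x \<and> is_sh y \<longrightarrow>
        teq sc (DeltaT Delta (diamond x y)) (bullet (DeltaT Delta x) (DeltaT Delta y)))
   \<and> teq sc (DeltaT Delta (muT 1)) (pt [[1], [1]])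
   \<and> (\<forall>x y. is_sh x \<and> is_sh y \<longrightarrow> epsT eps (diamond x y) = epsT eps x * epsT eps y)
   \<and> epsT eps (muT 1 :: 'a list list \<Rightarrow>\<^sub>0 'k) = 1
   \<and> (\<forall>x. is_sh x \<longrightarrow>
        teq sc (tmap_left (DTw Delta) (DeltaT Delta x)) (tmap_right (DTw Delta) (DeltaT Delta x)))
   \<and> (\<forall>x. is_sh x \<longrightarrow> teq sc (counit_left (epsw eps) (DeltaT Delta x)) x)
   \<and> (\<forall>x. is_sh x \<longrightarrow> teq sc (DeltaT Delta (Pr x)) (id_Pr (DeltaT Delta x)))"
proof -
  interpret left_counital_bialgebra sc Delta eps
    by (rule left_counital_bialgebra.intro[OF bialg])
  show ?thesis
    by (intro conjI allI impI; (elim conjE)?)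
      (auto simp: diamond_assoc diamond_muT Pr_nijenhuis epsT_diamond_bialgebra epsT_muT_1
        epsT_nullT_bialgebra
        intro: nullT_diamond_left[OF k_algebra] nullT_diamond_right[OF k_algebra] nullT_Pr nullT_DeltaT
          is_sh_diamond is_sh_muT is_sh_Pr is_sh2_DeltaT teq_diamond_commute DeltaT_diamond
          DeltaT_muT_1 coassoc_DeltaT counit_left_DeltaT DeltaT_Pr)
qed

end
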